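(* Let $c=5/4$, $\alpha>2$, $\lambda_b>0$, $P>0$, $\tilde\sigma^2\ge 0$ and $\omega>0$ be constants. Let $d_1,d_2$ be independent random variables, each with probability density $f_d(x)=2c\lambda_b\pi x e^{-c\lambda_b\pi x^2}$, $x\ge 0$, and let $d=\max\{d_1,d_2\}$. For $s\in\mathbb{C}$ with $\mathrm{Re}(s)>0$ define $$\varphi(s)=\mathbb{E}\left\{\exp\left(-\frac{\tilde\sigma^2}{P}\,s\,d^{\alpha}-\pi\lambda_b\,\omega\, d^2 s^{2/\alpha}\right)\right\}.$$ Then $$\varphi(s)=\frac{2c}{c+\omega s^{2/\alpha}}\,H_{1,1}^{1,1}\left(\frac{\tilde\sigma^2}{P}\,s\left(\pi\lambda_b\left(c+\omega s^{2/\alpha}\right)\right)^{-\alpha/2}\right)-\frac{2c}{2c+\omega s^{2/\alpha}}\,H_{1,1}^{1,1}\left(\frac{\tilde\sigma^2}{P}\,s\left(\pi\lambda_b\left(2c+\omega s^{2/\alpha}\right)\right)^{-\alpha/2}\right),$$ where $H_{1,1}^{1,1}(x)$ denotes the Fox H-function $H_{1,1}^{1,1}\left(x\,\middle|\,\begin{smallmatrix}(0,\alpha/2)\\(0,1)\end{smallmatrix}\right)$. Moreover, for fixed $s$ (and fixed $\omega,\lambda_b,\alpha$), in the limit $\tilde\sigma^2/P\to 0$, $$\varphi(s)\to\frac{2c}{c+\omega s^{2/\alpha}}-\frac{2c}{2c+\omega s^{2/\alpha}}.$$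
   Context: Model: small-cell base stations form a homogeneous Poisson point process of intensity $\lambda_b$; the distance between a user and its serving (closest) base station is modeled by the density $f_d$ above. Under random NOMA grouping, two users are paired and the far user's link distance $d$ is the larger of the two i.i.d. distances. Here $\tilde\sigma^2=\sigma^2\|\mathbf{u}\|^2$ is the filtered noise power, $P$ the transmit power per stream, and $\omega$ plays the role of $\Gamma(1-2/\alpha)\left(\frac{\rho_I}{P}|\mathbf{u}^{\mathrm H}\mathbf{1}|^2\right)^{2/\alpha}$ (interference-related constant), treated as a fixed positive number. Powers $s^{2/\alpha}$, $(\cdot)^{-\alpha/2}$ and $x^{-\xi}$ use principal branches. The Fox H-function is defined by the Mellin–Barnes integral $H_{1,1}^{1,1}\left(x\,\middle|\,\begin{smallmatrix}(0,\alpha/2)\\(0,1)\end{smallmatrix}\right)=\frac{1}{2\pi \mathrm{i}}\int_{\mathcal L}\Gamma(\xi)\,\Gamma\left(1-\tfrac{\alpha}{2}\xi\right)x^{-\xi}\,d\xi$, where $\mathcal L$ is a vertical line $\mathrm{Re}(\xi)=\gamma$ with $0<\gamma<2/\alpha$ separating the poles of $\Gamma(\xi)$ from those of $\Gamma(1-\frac{\alpha}{2}\xi)$. *)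

theory Defs
  imports "HOL-Probability.Probability"
begin

definition dist_density :: "real \<Rightarrow> real \<Rightarrow> real \<Rightarrow> real" where
  "dist_density c lb x = (if 0 \<le> x then 2 * c * lb * pi * x * exp (- c * lb * pi * x\<^sup>2) else 0)"

text \<open>Fox H-function H^{1,1}_{1,1}(x | (0,alpha/2); (0,1)) via its Mellin--Barnes integral
  (1/(2 pi i)) \<integral>_L Gamma(xi) Gamma(1 - alpha/2 xi) x^(-xi) d xi along the vertical line
  Re xi = 1/alpha (which lies in (0, 2/alpha)); parametrising xi = 1/alpha + i t gives d xi = i dt.
  At x = 0 the integral is not defined; there we use the standard value H(0) = 1 (the limit
  of the function at 0, the k = 0 term of its residue series).\<close>
definition mb_line :: "real \<Rightarrow> real \<Rightarrow> complex" where
  "mb_line \<alpha> t = Complex (1 / \<alpha>) t"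

definition foxH11 :: "real \<Rightarrow> complex \<Rightarrow> complex" where
  "foxH11 \<alpha> x =
     (if x = 0 then 1
      else (1 / (2 * pi)) *\<^sub>R
        (LBINT t. Gamma (mb_line \<alpha> t) * Gamma (1 - of_real (\<alpha> / 2) * mb_line \<alpha> t)
                  * x powr (- mb_line \<alpha> t)))"

end

theory Submission
  imports Defs
begin

text \<open>The larger of two independent distances with density \<open>f_d\<close> and distribution function \<open>F_d\<close>
  has density \<open>2 f_d F_d\<close>, which for \<open>f_d\<close> is \<open>4 a x (e^(-a x\<^sup>2) - e^(-2 a x\<^sup>2))\<close> with \<open>a = c \<lambda>\<^sub>b \<pi>\<close>.
  After the substitution \<open>u = x\<^sup>2\<close> the expectation becomes a difference of two integrals
  \<open>\<integral>\<^sub>0^\<infinity> e^(-B u) e^(-K u^(\<alpha>/2)) du\<close>, and each of them equals \<open>H(K B^(-\<alpha>/2)) / B\<close>: expand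
  \<open>e^(-K u^(\<alpha>/2))\<close> by the Cahen--Mellin integral \<open>(1/2\<pi>) \<integral> \<Gamma>(\<xi>) (K u^(\<alpha>/2))^(-\<xi>) dt\<close> along
  \<open>\<xi> = 1/\<alpha> + i t\<close> (a Fourier inversion in disguise) and exchange the integrals; the \<open>u\<close>-integral is then
  a Gamma integral with complex scale \<open>B\<close>, and Fubini applies because \<open>\<Gamma>\<close> decays exponentially on
  vertical lines. The limit \<open>\<sigma>\<^sup>2/P \<rightarrow> 0\<close> is dominated convergence.\<close>

section \<open>Gamma integrals with a complex scale\<close>

lemma Gamma_add_of_nat_eq_gbinomial:
  fixes a w :: "'a :: Gamma"
  assumes "a \<notin> \<int>\<^sub>\<le>\<^sub>0"
  shows "Gamma (a + of_nat n) * (w ^ n / fact n) = Gamma a * (((- a) gchoose n) * (- w) ^ n)"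
proof -
  have "Gamma (a + of_nat n) = Gamma a * pochhammer a n"
    using pochhammer_Gamma[OF assms, of n] assms by (simp add: Gamma_eq_zero_iff field_simps)
  moreover have "((- a) gchoose n) * (- w) ^ n = pochhammer a n * w ^ n / fact n"
    by (simp add: gbinomial_pochhammer power_mult_distrib[symmetric] field_simps)
  ultimately show ?thesis by (simp add: field_simps)
qed

lemma nonpos_Ints_Re_pos: "Re (z :: complex) > 0 \<Longrightarrow> z \<notin> \<int>\<^sub>\<le>\<^sub>0"
  by (auto elim!: nonpos_Ints_cases)

lemma powr_add_of_nat:
  fixes x a :: complex
  assumes "x \<noteq> 0"
  shows "x powr (a + of_nat n) = x powr a * x ^ n"
  using assms by (simp add: powr_add powr_nat')

lemma summable_Gamma_add_of_nat:
  fixes a x :: real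
  assumes "a > 0" and "\<bar>x\<bar> < 1"
  shows "summable (\<lambda>n. Gamma (a + real n) * (x ^ n / fact n))"
proof -
  have a: "a \<notin> \<int>\<^sub>\<le>\<^sub>0" using assms(1) by (auto elim!: nonpos_Ints_cases)
  have "summable (\<lambda>n. ((- a) gchoose n) * (- x) ^ n)"
    using gen_binomial_real[of "- x" "- a"] assms(2) by (auto simp: sums_iff)
  then show ?thesis
    using Gamma_add_of_nat_eq_gbinomial[OF a] by (simp add: summable_mult)
qed

lemma set_integral_norm_Gamma_integrand:
  fixes \<xi> :: complex
  assumes "Re \<xi> > 0"
  shows "(LINT v:{0<..}|lebesgue. norm (of_real v powr (\<xi> - 1) / of_real (exp v))) = Gamma (Re \<xi>)"
proof -
  have Gamma: "((\<lambda>v. v powr (Re \<xi> - 1) / exp v) has_integral Gamma (Re \<xi>)) {0<..}"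
    using Gamma_integral_real[OF assms]
    by (rule has_integral_spike_set_eq[THEN iffD1, rotated 2]) (auto intro!: empty_imp_negligible)
  then have "(\<lambda>v. v powr (Re \<xi> - 1) / exp v) absolutely_integrable_on {0<..}"
    by (intro nonnegative_absolutely_integrable_1) (auto simp: has_integral_integrable)
  with Gamma have "(LINT v:{0<..}|lebesgue. v powr (Re \<xi> - 1) / exp v) = Gamma (Re \<xi>)"
    by (simp add: set_lebesgue_integral_eq_integral(2) integral_unique)
  moreover have "(LINT v:{0<..}|lebesgue. norm (of_real v powr (\<xi> - 1) / of_real (exp v)))
      = (LINT v:{0<..}|lebesgue. v powr (Re \<xi> - 1) / exp v)"
    by (rule set_lebesgue_integral_cong) (auto simp: norm_divide norm_powr_real_powr)
  ultimately show ?thesis by simp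
qed

lemma set_borel_integral_eq_integral:
  fixes g :: "real \<Rightarrow> 'b::euclidean_space"
  assumes g: "g absolutely_integrable_on S" and m: "set_borel_measurable borel S g"
  shows "set_integrable lborel S g" and "(LINT u:S|lborel. g u) = integral S g"
proof -
  have m': "(\<lambda>u. indicator S u *\<^sub>R g u) \<in> borel_measurable lborel"
    using m by (simp add: set_borel_measurable_def)
  then show "set_integrable lborel S g"
    using g by (simp add: set_integrable_def integrable_completion[symmetric])
  have "integral S g = (LINT u:S|lebesgue. g u)"
    using set_lebesgue_integral_eq_integral(2)[OF g] by simp
  also have "\<dots> = (LINT u:S|lborel. g u)"
    using m' by (simp add: set_lebesgue_integral_def integral_completion)
  finally show "(LINT u:S|lborel. g u) = integral S g" by simp
qed

lemma set_integral_Gamma_integrand: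
  fixes z :: complex
  assumes "Re z > 0"
  shows "(LINT v:{0<..}|lebesgue. of_real v powr (z - 1) / of_real (exp v)) = Gamma z"
  using set_lebesgue_integral_eq_integral(2)[OF absolutely_integrable_Gamma_integral'[OF assms]]
    Gamma_integral_complex'[OF assms] by (simp add: integral_unique)

lemma Gamma_integrand_exp_series:
  fixes \<xi> w :: complex and v :: real
  assumes v: "v > 0"
  shows "(\<lambda>n. of_real v powr (\<xi> + of_nat n - 1) / of_real (exp v) * (w ^ n / fact n))
      sums (of_real v powr (\<xi> - 1) * exp (- (1 - w) * of_real v))"
    and "summable (\<lambda>n. norm (of_real v powr (\<xi> + of_nat n - 1) / of_real (exp v) * (w ^ n / fact n)))"
proof -
  have series_term: "of_real v powr (\<xi> + of_nat n - 1) / of_real (exp v) * (w ^ n / fact n)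
      = (of_real v powr (\<xi> - 1) / of_real (exp v)) * ((w * of_real v) ^ n /\<^sub>R fact n)" for n
    using v powr_add_of_nat[of "of_real v" "\<xi> - 1" n]
    by (simp add: power_mult_distrib scaleR_conv_of_real field_simps)
  have "(of_real v powr (\<xi> - 1) / of_real (exp v)) * exp (w * of_real v)
      = of_real v powr (\<xi> - 1) * exp (- (1 - w) * of_real v)"
    by (simp add: exp_diff algebra_simps exp_of_real[symmetric] exp_minus field_simps)
  with sums_mult[OF exp_converges[of "w * of_real v"], of "of_real v powr (\<xi> - 1) / of_real (exp v)"]
  show "(\<lambda>n. of_real v powr (\<xi> + of_nat n - 1) / of_real (exp v) * (w ^ n / fact n))
      sums (of_real v powr (\<xi> - 1) * exp (- (1 - w) * of_real v))"
    unfolding series_term by simp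
  show "summable (\<lambda>n. norm (of_real v powr (\<xi> + of_nat n - 1) / of_real (exp v) * (w ^ n / fact n)))"
    unfolding series_term norm_mult by (intro summable_mult summable_norm_exp)
qed

lemma Gamma_integral_disc:
  fixes \<xi> w :: complex
  assumes \<xi>: "Re \<xi> > 0" and w: "norm w < 1"
  shows "set_integrable lebesgue {0<..} (\<lambda>v. of_real v powr (\<xi> - 1) * exp (- (1 - w) * of_real v))"
    and "(LINT v:{0<..}|lebesgue. of_real v powr (\<xi> - 1) * exp (- (1 - w) * of_real v))
          = Gamma \<xi> * (1 - w) powr (- \<xi>)"
proof -
  \<comment> \<open>Integrate the exponential series of \<open>e^(w v)\<close> termwise: the \<open>n\<close>-th term gives \<open>\<Gamma>(\<xi> + n) w^n / n!\<close>,
    and these sum to \<open>\<Gamma>(\<xi>) (1 - w)^(-\<xi>)\<close> by the binomial series.\<close>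
  define g where "g n v = of_real v powr (\<xi> + of_nat n - 1) / of_real (exp v)" for n and v :: real
  define f where "f n v = indicator {0<..} v *\<^sub>R (g n v * (w ^ n / fact n))" for n v
  have \<xi>n: "Re (\<xi> + of_nat n) > 0" for n using \<xi> by simp
  have g_int: "set_integrable lebesgue {0<..} (g n)" for n
    unfolding g_def by (rule absolutely_integrable_Gamma_integral'[OF \<xi>n])
  have f_int: "integrable lebesgue (f n)" for n
    using set_integrable_mult_left[OF g_int[of n]] unfolding f_def set_integrable_def .
  have f_integral: "integral\<^sup>L lebesgue (f n) = Gamma (\<xi> + of_nat n) * (w ^ n / fact n)" for n
  proof -
    have "f n = (\<lambda>v. (indicator {0<..} v *\<^sub>R g n v) * (w ^ n / fact n))"
      by (simp add: fun_eq_iff f_def indicator_def)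
    then have "integral\<^sup>L lebesgue (f n) = (LINT v:{0<..}|lebesgue. g n v) * (w ^ n / fact n)"
      unfolding set_lebesgue_integral_def by (simp only: integral_mult_left_zero)
    then show ?thesis
      using set_integral_Gamma_integrand[OF \<xi>n[of n]] by (simp only: g_def)
  qed
  have norm_f_integral: "integral\<^sup>L lebesgue (\<lambda>v. norm (f n v)) = Gamma (Re \<xi> + real n) * (norm w ^ n / fact n)" for n
  proof -
    have "(\<lambda>v. norm (f n v)) = (\<lambda>v. indicator {0<..} v * norm (g n v) * (norm w ^ n / fact n))"
      by (auto simp: fun_eq_iff f_def norm_mult norm_divide norm_power indicator_def)
    then show ?thesis
      using set_integral_norm_Gamma_integrand[OF \<xi>n[of n]]
      by (simp add: g_def set_lebesgue_integral_def)
  qed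
  have summable_norm_integrals: "summable (\<lambda>n. integral\<^sup>L lebesgue (\<lambda>v. norm (f n v)))"
    unfolding norm_f_integral using summable_Gamma_add_of_nat[of "Re \<xi>" "norm w"] \<xi> w by simp
  have f_sums: "(\<lambda>n. f n v) sums (indicator {0<..} v *\<^sub>R (of_real v powr (\<xi> - 1) * exp (- (1 - w) * of_real v)))" for v
    using Gamma_integrand_exp_series(1)[of v \<xi> w] by (cases "v > 0") (simp_all add: f_def g_def)
  have summable_norm_f: "summable (\<lambda>n. norm (f n v))" for v
    using Gamma_integrand_exp_series(2)[of v \<xi> w] by (cases "v > 0") (simp_all add: f_def g_def)
  have sum_f: "(\<lambda>v. \<Sum>n. f n v) = (\<lambda>v. indicator {0<..} v *\<^sub>R (of_real v powr (\<xi> - 1) * exp (- (1 - w) * of_real v)))"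
    using f_sums by (auto simp: sums_iff)
  show "set_integrable lebesgue {0<..} (\<lambda>v. of_real v powr (\<xi> - 1) * exp (- (1 - w) * of_real v))"
    using integrable_suminf[OF f_int _ summable_norm_integrals] summable_norm_f
    unfolding set_integrable_def sum_f by simp
  have "(\<lambda>n. Gamma \<xi> * (((- \<xi>) gchoose n) * (- w) ^ n)) sums (Gamma \<xi> * (1 - w) powr (- \<xi>))"
    using gen_binomial_complex[of "- w" "- \<xi>"] w by (intro sums_mult) simp
  then have "(\<lambda>n. integral\<^sup>L lebesgue (f n)) sums (Gamma \<xi> * (1 - w) powr (- \<xi>))"
    unfolding f_integral Gamma_add_of_nat_eq_gbinomial[OF nonpos_Ints_Re_pos[OF \<xi>]] .
  then show "(LINT v:{0<..}|lebesgue. of_real v powr (\<xi> - 1) * exp (- (1 - w) * of_real v))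
          = Gamma \<xi> * (1 - w) powr (- \<xi>)"
    using sums_integral[OF f_int _ summable_norm_integrals] summable_norm_f
    unfolding set_lebesgue_integral_def sum_f by (simp add: sums_unique2)
qed

lemma norm_one_minus_scaled_less_1:
  fixes z :: complex
  assumes z: "Re z > 0"
  shows "cmod (1 - of_real (Re z / (cmod z)\<^sup>2) * z) < 1"
proof -
  define r where "r = Re z / (cmod z)\<^sup>2"
  have z0: "z \<noteq> 0" using z by auto
  have "(cmod (1 - of_real r * z))\<^sup>2 = (1 - r * Re z)\<^sup>2 + (r * Im z)\<^sup>2"
    by (simp add: cmod_power2)
  also have "\<dots> = 1 - 2 * r * Re z + r\<^sup>2 * ((Re z)\<^sup>2 + (Im z)\<^sup>2)"
    by (simp add: power2_eq_square algebra_simps)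
  also have "\<dots> = 1 - 2 * r * Re z + r\<^sup>2 * (cmod z)\<^sup>2"
    by (simp add: cmod_power2)
  also have "\<dots> = 1 - (Re z)\<^sup>2 / (cmod z)\<^sup>2"
    using z0 by (simp add: r_def power2_eq_square field_simps)
  finally have "(cmod (1 - of_real r * z))\<^sup>2 < 1"
    using z z0 by simp
  then show ?thesis
    by (simp add: r_def power_less_one_iff abs_square_less_1)
qed

lemma absolutely_integrable_Ioi_scale_iff:
  fixes f :: "real \<Rightarrow> 'b::euclidean_space" and r :: real
  assumes r: "r > 0"
  shows "(\<lambda>u. r *\<^sub>R f (r * u)) absolutely_integrable_on {0<..} \<and> integral {0<..} (\<lambda>u. r *\<^sub>R f (r * u)) = b
    \<longleftrightarrow> f absolutely_integrable_on {0<..} \<and> integral {0<..} f = b"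
proof -
  have "(\<lambda>u. \<bar>r\<bar> *\<^sub>R f (r * u)) absolutely_integrable_on {0<..} \<and> integral {0<..} (\<lambda>u. \<bar>r\<bar> *\<^sub>R f (r * u)) = b
    \<longleftrightarrow> f absolutely_integrable_on (\<lambda>u. r * u) ` {0<..} \<and> integral ((\<lambda>u. r * u) ` {0<..}) f = b"
    by (rule has_absolute_integral_change_of_variables_real) (use r in \<open>auto intro!: derivative_eq_intros inj_onI\<close>)
  moreover have "(\<lambda>u. r * u) ` {0<..} = {0<..}"
    using r by (auto simp: image_iff intro!: bexI[of _ "x / r" for x])
  ultimately show ?thesis
    using r by simp
qed

lemma Gamma_integral_complex_scale:
  fixes \<xi> z :: complex
  assumes z: "Re z > 0" and \<xi>: "Re \<xi> > 0"
  shows "(\<lambda>v. of_real v powr (\<xi> - 1) * exp (- z * of_real v)) absolutely_integrable_on {0<..}"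
    and "((\<lambda>v. of_real v powr (\<xi> - 1) * exp (- z * of_real v)) has_integral Gamma \<xi> * z powr (- \<xi>)) {0<..}"
proof -
  \<comment> \<open>Reduce to the disc case for \<open>r z\<close>, where \<open>r\<close> is chosen with \<open>|1 - r z| < 1\<close>.\<close>
  define f where "f v = of_real v powr (\<xi> - 1) * exp (- z * of_real v)" for v :: real
  define r where "r = Re z / (cmod z)\<^sup>2"
  have "z \<noteq> 0" using z by auto
  with z have r: "r > 0" by (simp add: r_def)
  define F where "F u = of_real u powr (\<xi> - 1) * exp (- (of_real r * z) * of_real u)" for u :: real
  have F_abs: "F absolutely_integrable_on {0<..}"
    and "(LINT u:{0<..}|lebesgue. F u) = Gamma \<xi> * (of_real r * z) powr (- \<xi>)"
    using Gamma_integral_disc[OF \<xi> norm_one_minus_scaled_less_1[OF z], folded r_def] by (simp_all add: F_def[abs_def])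
  then have F_integral: "integral {0<..} F = Gamma \<xi> * (of_real r * z) powr (- \<xi>)"
    by (simp add: set_lebesgue_integral_eq_integral(2)[OF F_abs])
  have f_scaled: "r *\<^sub>R f (r * u) = of_real r powr \<xi> * F u" if "u \<in> {0<..}" for u
  proof -
    have "of_real (r * u) powr (\<xi> - 1) = of_real r powr (\<xi> - 1) * of_real u powr (\<xi> - 1)"
      using r that by (simp add: powr_times_real_left)
    moreover have "of_real r * of_real r powr (\<xi> - 1) = of_real r powr \<xi>"
      using r by (simp add: powr_diff)
    ultimately show ?thesis
      by (simp add: f_def F_def scaleR_conv_of_real algebra_simps)
  qed
  have "integral {0<..} (\<lambda>u. r *\<^sub>R f (r * u)) = of_real r powr \<xi> * integral {0<..} F"
    by (subst integral_cong[OF f_scaled]) (simp_all add: integral_mult_right)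
  also have "\<dots> = Gamma \<xi> * z powr (- \<xi>)"
    unfolding F_integral using r by (simp add: powr_times_real_left powr_minus)
  finally have "integral {0<..} (\<lambda>u. r *\<^sub>R f (r * u)) = Gamma \<xi> * z powr (- \<xi>)" .
  moreover have "(\<lambda>u. r *\<^sub>R f (r * u)) absolutely_integrable_on {0<..}"
    using set_integrable_mult_right[OF F_abs, of "of_real r powr \<xi>"]
    by (rule absolutely_integrable_spike[OF _ negligible_empty]) (simp add: f_scaled)
  ultimately have f_abs: "f absolutely_integrable_on {0<..}" and "integral {0<..} f = Gamma \<xi> * z powr (- \<xi>)"
    using absolutely_integrable_Ioi_scale_iff[OF r] by blast+
  with integrable_integral[OF set_lebesgue_integral_eq_integral(1)[OF f_abs]]
  show "f absolutely_integrable_on {0<..}" "(f has_integral Gamma \<xi> * z powr (- \<xi>)) {0<..}"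
    by (simp_all add: f_abs)
qed

section \<open>Decay of the Gamma function on vertical lines\<close>

lemma norm_Gamma_Complex_le:
  fixes a t \<theta> :: real
  assumes a: "a > 0" and \<theta>: "0 \<le> \<theta>" "\<theta> < pi / 2"
  shows "norm (Gamma (Complex a t)) \<le> Gamma a / cos \<theta> powr a * exp (- \<theta> * \<bar>t\<bar>)"
proof -
  \<comment> \<open>Rotate the Gamma integral by the angle \<open>\<phi> = \<plusminus>\<theta>\<close> carrying the sign of \<open>t\<close>:
    \<open>\<Gamma>(\<xi>) = z^\<xi> \<integral> v^(\<xi>-1) e^(-z v) dv\<close> for \<open>z = e^(i \<phi>)\<close>, where \<open>|z^\<xi>| = e^(-\<theta> |t|)\<close>,
    and the integral is dominated by the real one with \<open>\<xi> = a\<close> and \<open>z = cos \<theta>\<close>.\<close>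
  define \<phi> where "\<phi> = (if t \<ge> 0 then \<theta> else - \<theta>)"
  define z where "z = cis \<phi>"
  define \<xi> where "\<xi> = Complex a t"
  have cos_pos: "cos \<theta> > 0" using \<theta> by (intro cos_gt_zero_pi) auto
  have Re_z: "Re z = cos \<theta>" by (simp add: z_def \<phi>_def)
  have Re_\<xi>: "Re \<xi> > 0" using a by (simp add: \<xi>_def)
  define f where "f v = of_real v powr (\<xi> - 1) * exp (- z * of_real v)" for v :: real
  have f: "(f has_integral Gamma \<xi> * z powr (- \<xi>)) {0<..}"
    unfolding f_def by (rule Gamma_integral_complex_scale(2)) (use Re_z cos_pos Re_\<xi> in auto)
  have "((\<lambda>v. of_real v powr (complex_of_real a - 1) * exp (- of_real (cos \<theta>) * of_real v))
      has_integral Gamma (of_real a) * of_real (cos \<theta>) powr (- of_real a)) {0<..}"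
    by (rule Gamma_integral_complex_scale(2)) (use cos_pos a in auto)
  moreover have "Re (Gamma (of_real a) * of_real (cos \<theta>) powr (- of_real a)) = Gamma a * cos \<theta> powr (- a)"
    using cos_pos powr_of_real[of "cos \<theta>" "- a"] by (simp add: Gamma_complex_of_real)
  moreover have "Re (of_real v powr (complex_of_real a - 1) * exp (- of_real (cos \<theta>) * of_real v))
      = v powr (a - 1) * exp (- cos \<theta> * v)" if "v \<in> {0<..}" for v
    using that powr_of_real[of v "a - 1"] by (simp add: Re_exp)
  ultimately have g: "((\<lambda>v. v powr (a - 1) * exp (- cos \<theta> * v)) has_integral Gamma a * cos \<theta> powr (- a)) {0<..}"
    by (metis (no_types, lifting) has_integral_Re has_integral_eq)
  have "norm (f v) = v powr (a - 1) * exp (- cos \<theta> * v)" if "v \<in> {0<..}" for v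
    using that by (simp add: f_def norm_mult norm_powr_real_powr \<xi>_def Re_z)
  then have "norm (integral {0<..} f) \<le> integral {0<..} (\<lambda>v. v powr (a - 1) * exp (- cos \<theta> * v))"
    using f g by (intro integral_norm_bound_integral) auto
  then have "norm (Gamma \<xi> * z powr (- \<xi>)) \<le> Gamma a * cos \<theta> powr (- a)"
    using f g by (simp add: integral_unique)
  moreover have "norm (z powr \<xi>) = exp (- \<theta> * \<bar>t\<bar>)"
    using \<theta> by (simp add: norm_powr_complex z_def Arg_cis \<xi>_def \<phi>_def)
  moreover have "Gamma \<xi> = Gamma \<xi> * z powr (- \<xi>) * z powr \<xi>"
    by (simp add: z_def powr_minus)
  ultimately have "norm (Gamma \<xi>) \<le> Gamma a * cos \<theta> powr (- a) * exp (- \<theta> * \<bar>t\<bar>)"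
    by (metis mult_right_mono norm_ge_zero norm_mult)
  then show ?thesis by (simp add: \<xi>_def powr_minus divide_inverse)
qed

lemma continuous_on_Gamma_vertical_line:
  fixes \<gamma> :: real and z :: complex
  assumes \<gamma>: "\<gamma> > 0" and z: "z \<noteq> 0"
  shows "continuous_on UNIV (\<lambda>t. Gamma (Complex \<gamma> t) * z powr (- Complex \<gamma> t))"
proof -
  have line: "continuous_on UNIV (\<lambda>t. Complex \<gamma> t)"
    unfolding Complex_eq by (intro continuous_intros)
  have "continuous_on {z. Re z > 0} Gamma"
    by (rule continuous_on_Gamma) (auto elim!: nonpos_Ints_cases)
  then have "continuous_on UNIV (\<lambda>t. Gamma (Complex \<gamma> t))"
    by (rule continuous_on_compose2[OF _ line]) (use \<gamma> in auto)
  with line show ?thesis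
    using z by (simp add: powr_def continuous_intros)
qed

lemma Gamma_vertical_line_exp_bound:
  fixes \<gamma> :: real and z :: complex
  assumes \<gamma>: "\<gamma> > 0" and z: "Re z > 0"
  obtains C c where "c > 0" "\<And>t. norm (Gamma (Complex \<gamma> t) * z powr (- Complex \<gamma> t)) \<le> C * exp (- c * \<bar>t\<bar>)"
proof -
  define A where "A = \<bar>Arg z\<bar>"
  have A: "0 \<le> A" "A < pi / 2"
    using z Arg_Re_pos[of z] by (auto simp: A_def)
  define \<theta> where "\<theta> = (pi / 2 + A) / 2"
  have \<theta>: "0 \<le> \<theta>" "\<theta> < pi / 2" "cos \<theta> > 0" using A by (auto simp: \<theta>_def intro!: cos_gt_zero_pi)
  define C where "C = Gamma \<gamma> / cos \<theta> powr \<gamma> * norm z powr (- \<gamma>)"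
  have C: "C \<ge> 0" using \<gamma> \<theta> by (simp add: C_def Gamma_real_pos less_imp_le)
  have "norm (Gamma (Complex \<gamma> t) * z powr (- Complex \<gamma> t)) \<le> C * exp (- (\<theta> - A) * \<bar>t\<bar>)" for t
  proof -
    have "t * Arg z \<le> \<bar>t\<bar> * A" unfolding A_def by (metis abs_ge_self abs_mult)
    then have decay: "exp (- \<theta> * \<bar>t\<bar>) * exp (t * Arg z) \<le> exp (- (\<theta> - A) * \<bar>t\<bar>)"
      by (simp add: exp_add[symmetric] algebra_simps)
    have "norm (Gamma (Complex \<gamma> t) * z powr (- Complex \<gamma> t))
        = norm (Gamma (Complex \<gamma> t)) * (norm z powr (- \<gamma>) * exp (t * Arg z))"
      by (simp add: norm_mult norm_powr_complex)
    also have "\<dots> \<le> Gamma \<gamma> / cos \<theta> powr \<gamma> * exp (- \<theta> * \<bar>t\<bar>) * (norm z powr (- \<gamma>) * exp (t * Arg z))"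
      by (intro mult_right_mono norm_Gamma_Complex_le[OF \<gamma> \<theta>(1,2)]) auto
    also have "\<dots> = C * (exp (- \<theta> * \<bar>t\<bar>) * exp (t * Arg z))"
      by (simp add: C_def mult_ac)
    also have "\<dots> \<le> C * exp (- (\<theta> - A) * \<bar>t\<bar>)"
      by (rule mult_left_mono[OF decay C])
    finally show ?thesis .
  qed
  moreover have "\<theta> - A > 0" using A by (simp add: \<theta>_def)
  ultimately show ?thesis using that by blast
qed

lemma integrable_exp_neg_abs:
  fixes c :: real
  assumes c: "c > 0"
  shows "integrable lborel (\<lambda>t::real. exp (- c * \<bar>t\<bar>))"
proof -
  have "(\<lambda>t::real. exp (- c * t)) absolutely_integrable_on {0..}"
    using integrable_on_exp_minus_to_infinity[OF c, of 0] by (intro nonnegative_absolutely_integrable_1) auto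
  then have pos: "integrable lborel (\<lambda>t::real. indicator {0..} t *\<^sub>R exp (- c * t))"
    by (simp add: set_integrable_def integrable_completion[symmetric])
  then have neg: "integrable lborel (\<lambda>t::real. indicator {0..} (0 + (-1) * t) *\<^sub>R exp (- c * (0 + (-1) * t)))"
    by (subst lborel_integrable_real_affine_iff) auto
  from Bochner_Integration.integrable_add[OF pos neg] show ?thesis
    by (rule Bochner_Integration.integrable_bound) (auto simp: indicator_def)
qed

lemma integrable_Gamma_vertical_line:
  fixes \<gamma> :: real and z :: complex
  assumes \<gamma>: "\<gamma> > 0" and z: "Re z > 0"
  shows "integrable lborel (\<lambda>t. Gamma (Complex \<gamma> t) * z powr (- Complex \<gamma> t))"
proof -
  obtain C c where c: "c > 0"
    and bound: "\<And>t. norm (Gamma (Complex \<gamma> t) * z powr (- Complex \<gamma> t)) \<le> C * exp (- c * \<bar>t\<bar>)"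
    using Gamma_vertical_line_exp_bound[OF \<gamma> z] by blast
  have "z \<noteq> 0" using z by auto
  from integrable_mult_right[OF integrable_exp_neg_abs[OF c], of C] show ?thesis
  proof (rule Bochner_Integration.integrable_bound)
    show "(\<lambda>t. Gamma (Complex \<gamma> t) * z powr (- Complex \<gamma> t)) \<in> borel_measurable lborel"
      using borel_measurable_continuous_onI[OF continuous_on_Gamma_vertical_line[OF \<gamma> \<open>z \<noteq> 0\<close>]] by simp
    show "AE t in lborel. norm (Gamma (Complex \<gamma> t) * z powr (- Complex \<gamma> t)) \<le> norm (C * exp (- c * \<bar>t\<bar>))"
      using bound by (intro AE_I2) (metis abs_ge_self order_trans real_norm_def)
  qed
qed

section \<open>Fourier inversion at the origin\<close>

lemma integrable_pair_measure_product_bound: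
  fixes F :: "'a \<times> 'b \<Rightarrow> 'c::{banach, second_countable_topology}"
  assumes "sigma_finite_measure M" "sigma_finite_measure N"
    and F: "F \<in> borel_measurable (M \<Otimes>\<^sub>M N)"
    and a: "integrable M a" and b: "integrable N b"
    and bound: "\<And>x y. norm (F (x, y)) \<le> a x * b y"
  shows "integrable (M \<Otimes>\<^sub>M N) F"
proof -
  interpret pair_sigma_finite M N by (simp add: assms pair_sigma_finite_def)
  have [measurable]: "a \<in> borel_measurable M" "b \<in> borel_measurable N"
    using a b by auto
  have "(\<integral>\<^sup>+ p. ennreal (norm (a (fst p)) * norm (b (snd p))) \<partial>(M \<Otimes>\<^sub>M N))
        = (\<integral>\<^sup>+ x. ennreal (norm (a x)) \<partial>M) * (\<integral>\<^sup>+ y. ennreal (norm (b y)) \<partial>N)"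
    by (subst M2.nn_integral_fst[symmetric])
       (simp_all add: ennreal_mult nn_integral_cmult nn_integral_multc)
  also have "\<dots> < \<infinity>"
    using a b by (simp add: integrable_iff_bounded ennreal_mult_less_top)
  finally have "integrable (M \<Otimes>\<^sub>M N) (\<lambda>p. norm (a (fst p)) * norm (b (snd p)))"
    by (intro integrableI_bounded) (auto simp: norm_mult)
  then show ?thesis
  proof (rule Bochner_Integration.integrable_bound)
    show "AE p in M \<Otimes>\<^sub>M N. norm (F p) \<le> norm (norm (a (fst p)) * norm (b (snd p)))"
      using bound by (intro AE_I2) (metis abs_ge_self abs_mult mult_mono' order_trans prod.collapse real_norm_def)
  qed (rule F)
qed

lemma integrable_Gaussian:
  fixes \<sigma> :: real
  assumes "\<sigma> > 0"
  shows "integrable lborel (\<lambda>t. exp (- (\<sigma> * t)\<^sup>2 / 2))"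
proof -
  have "integrable lborel (\<lambda>t. std_normal_density (0 + \<sigma> * t))"
    using integrable_std_normal_moment[of 0] assms by (subst lborel_integrable_real_affine_iff) auto
  then have "integrable lborel (\<lambda>t. sqrt (2 * pi) * std_normal_density (0 + \<sigma> * t))"
    by simp
  then show ?thesis by (simp add: std_normal_density_def)
qed

lemma integral_Gaussian: "(\<integral>x. exp (- x\<^sup>2 / 2) \<partial>lborel) = sqrt (2 * pi)"
proof -
  have "(\<integral>x. exp (- x\<^sup>2 / 2) \<partial>lborel) = (\<integral>x. sqrt (2 * pi) * std_normal_density x \<partial>lborel)"
    by (simp add: std_normal_density_def)
  then show ?thesis
    using integral_std_normal_moment_even[of 0] by simp
qed

lemma Fourier_transform_Gaussian:
  fixes \<sigma> w :: real
  assumes \<sigma>: "\<sigma> > 0"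
  shows "(\<integral>t. exp (\<i> * of_real (t * w)) * of_real (exp (- (\<sigma> * t)\<^sup>2 / 2)) \<partial>lborel)
          = of_real (sqrt (2 * pi) / \<sigma> * exp (- (w / \<sigma>)\<^sup>2 / 2))"
proof -
  define f where "f x = std_normal_density x *\<^sub>R exp (\<i> * complex_of_real ((w / \<sigma>) * x))" for x
  have "char std_normal_distribution (w / \<sigma>) = of_real (exp (- (w / \<sigma>)\<^sup>2 / 2))"
    by (simp add: char_std_normal_distribution)
  then have "integral\<^sup>L lborel f = of_real (exp (- (w / \<sigma>)\<^sup>2 / 2))"
    unfolding char_def f_def by (subst (asm) integral_density) (auto simp: normal_density_nonneg)
  moreover have "integral\<^sup>L lborel f = \<bar>\<sigma>\<bar> *\<^sub>R (\<integral>t. f (0 + \<sigma> * t) \<partial>lborel)"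
    using \<sigma> by (intro lborel_integral_real_affine) simp
  moreover have "f (0 + \<sigma> * t) = of_real (1 / sqrt (2 * pi))
      * (exp (\<i> * complex_of_real (t * w)) * of_real (exp (- (\<sigma> * t)\<^sup>2 / 2)))" for t
    using \<sigma> by (simp add: f_def std_normal_density_def scaleR_conv_of_real mult_ac)
  ultimately have "of_real (exp (- (w / \<sigma>)\<^sup>2 / 2)) = \<sigma> *\<^sub>R (of_real (1 / sqrt (2 * pi)) *
      (\<integral>t. exp (\<i> * complex_of_real (t * w)) * of_real (exp (- (\<sigma> * t)\<^sup>2 / 2)) \<partial>lborel))"
    using \<sigma> by simp
  then show ?thesis
    using \<sigma> by (simp add: scaleR_conv_of_real field_simps)
qed

lemma integral_Fourier_transform_Gaussian_damped:
  fixes h H :: "real \<Rightarrow> complex" and \<sigma> :: real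
  assumes \<sigma>: "\<sigma> > 0" and h: "integrable lborel h"
    and H: "\<And>t. H t = (\<integral>w. exp (\<i> * of_real (t * w)) * h w \<partial>lborel)"
  shows "(\<integral>t. H t * of_real (exp (- (\<sigma> * t)\<^sup>2 / 2)) \<partial>lborel)
          = of_real (sqrt (2 * pi)) * (\<integral>x. h (\<sigma> * x) * of_real (exp (- x\<^sup>2 / 2)) \<partial>lborel)"
proof -
  have [measurable]: "h \<in> borel_measurable borel" using h by auto
  define F where "F t w = exp (\<i> * complex_of_real (t * w)) * h w * of_real (exp (- (\<sigma> * t)\<^sup>2 / 2))" for t w
  have F_int: "integrable (lborel \<Otimes>\<^sub>M lborel) (case_prod F)"
  proof (rule integrable_pair_measure_product_bound[OF _ _ _ integrable_Gaussian[OF \<sigma>] integrable_norm[OF h]])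
    show "case_prod F \<in> borel_measurable (lborel \<Otimes>\<^sub>M lborel)"
      unfolding F_def by measurable
  qed (auto simp: F_def norm_mult sigma_finite_lborel)
  have "(\<integral>t. H t * of_real (exp (- (\<sigma> * t)\<^sup>2 / 2)) \<partial>lborel) = (\<integral>t. (\<integral>w. F t w \<partial>lborel) \<partial>lborel)"
    by (simp add: H F_def)
  also have "\<dots> = (\<integral>w. (\<integral>t. F t w \<partial>lborel) \<partial>lborel)"
    using lborel_pair.Fubini_integral[OF F_int] by simp
  also have "\<dots> = (\<integral>w. h w * of_real (sqrt (2 * pi) / \<sigma> * exp (- (w / \<sigma>)\<^sup>2 / 2)) \<partial>lborel)"
  proof (rule Bochner_Integration.integral_cong[OF refl])
    fix w
    have "(\<integral>t. F t w \<partial>lborel)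
        = h w * (\<integral>t. exp (\<i> * of_real (t * w)) * of_real (exp (- (\<sigma> * t)\<^sup>2 / 2)) \<partial>lborel)"
      unfolding F_def by (simp add: mult_ac)
    then show "(\<integral>t. F t w \<partial>lborel) = h w * of_real (sqrt (2 * pi) / \<sigma> * exp (- (w / \<sigma>)\<^sup>2 / 2))"
      using Fourier_transform_Gaussian[OF \<sigma>, of w] by simp
  qed
  also have "\<dots> = \<bar>\<sigma>\<bar> *\<^sub>R (\<integral>x. h (0 + \<sigma> * x) * of_real (sqrt (2 * pi) / \<sigma> * exp (- ((0 + \<sigma> * x) / \<sigma>)\<^sup>2 / 2)) \<partial>lborel)"
    using \<sigma> by (intro lborel_integral_real_affine) simp
  also have "\<dots> = of_real (sqrt (2 * pi)) * (\<integral>x. h (\<sigma> * x) * of_real (exp (- x\<^sup>2 / 2)) \<partial>lborel)"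
  proof -
    have "(\<lambda>x. h (0 + \<sigma> * x) * of_real (sqrt (2 * pi) / \<sigma> * exp (- ((0 + \<sigma> * x) / \<sigma>)\<^sup>2 / 2)))
        = (\<lambda>x. of_real (sqrt (2 * pi) / \<sigma>) * (h (\<sigma> * x) * of_real (exp (- x\<^sup>2 / 2))))"
      using \<sigma> by (auto simp: fun_eq_iff mult_ac)
    then show ?thesis using \<sigma> by (simp add: scaleR_conv_of_real)
  qed
  finally show ?thesis .
qed

lemma Fourier_inversion_at_zero:
  fixes h H :: "real \<Rightarrow> complex" and B :: real
  assumes h: "integrable lborel h" and h_bounded: "\<And>w. norm (h w) \<le> B" and h_cont: "isCont h 0"
    and H: "\<And>t. H t = (\<integral>w. exp (\<i> * of_real (t * w)) * h w \<partial>lborel)"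
    and H_int: "integrable lborel H"
  shows "(\<integral>t. H t \<partial>lborel) = of_real (2 * pi) * h 0"
proof -
  \<comment> \<open>Damp \<open>H\<close> by the Gaussian \<open>e^(-(\<sigma> t)\<^sup>2/2)\<close> and let \<open>\<sigma> \<rightarrow> 0\<close> on both sides of the damped identity.\<close>
  have [measurable]: "h \<in> borel_measurable borel" "H \<in> borel_measurable borel"
    using h H_int by auto
  define \<sigma> where "\<sigma> n = 1 / (real n + 1)" for n :: nat
  have \<sigma>_pos: "\<sigma> n > 0" for n by (simp add: \<sigma>_def)
  have \<sigma>_lim: "\<sigma> \<longlonglongrightarrow> 0"
    unfolding \<sigma>_def using LIMSEQ_Suc[OF lim_inverse_n[where 'a=real]]
    by (simp add: inverse_eq_divide add.commute)
  have damped_H: "(\<lambda>n. \<integral>t. H t * of_real (exp (- (\<sigma> n * t)\<^sup>2 / 2)) \<partial>lborel) \<longlonglongrightarrow> (\<integral>t. H t \<partial>lborel)"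
  proof (rule integral_dominated_convergence[where w="\<lambda>t. norm (H t)"])
    show "AE t in lborel. (\<lambda>n. H t * of_real (exp (- (\<sigma> n * t)\<^sup>2 / 2))) \<longlonglongrightarrow> H t"
    proof (intro AE_I2)
      fix t
      have "(\<lambda>n. complex_of_real (exp (- (\<sigma> n * t)\<^sup>2 / 2))) \<longlonglongrightarrow> of_real (exp (- (0 * t)\<^sup>2 / 2))"
        by (intro tendsto_intros \<sigma>_lim) auto
      from tendsto_mult_left[OF this, of "H t"]
      show "(\<lambda>n. H t * of_real (exp (- (\<sigma> n * t)\<^sup>2 / 2))) \<longlonglongrightarrow> H t" by simp
    qed
    show "AE t in lborel. norm (H t * of_real (exp (- (\<sigma> n * t)\<^sup>2 / 2))) \<le> norm (H t)" for n
      by (intro AE_I2) (simp add: norm_mult mult_left_le)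
  qed (use H_int in simp_all)
  have damped_h: "(\<lambda>n. \<integral>x. h (\<sigma> n * x) * of_real (exp (- x\<^sup>2 / 2)) \<partial>lborel)
      \<longlonglongrightarrow> (\<integral>x. h 0 * of_real (exp (- x\<^sup>2 / 2)) \<partial>lborel)"
  proof (rule integral_dominated_convergence[where w="\<lambda>x. B * exp (- x\<^sup>2 / 2)"])
    show "integrable lborel (\<lambda>x. B * exp (- x\<^sup>2 / 2))"
      using integrable_Gaussian[of 1] by simp
    show "AE x in lborel. (\<lambda>n. h (\<sigma> n * x) * of_real (exp (- x\<^sup>2 / 2))) \<longlonglongrightarrow> h 0 * of_real (exp (- x\<^sup>2 / 2))"
    proof (intro AE_I2)
      fix x
      have "(\<lambda>n. \<sigma> n * x) \<longlonglongrightarrow> 0"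
        using tendsto_mult_right[OF \<sigma>_lim, of x] by simp
      from isCont_tendsto_compose[OF h_cont this]
      show "(\<lambda>n. h (\<sigma> n * x) * of_real (exp (- x\<^sup>2 / 2))) \<longlonglongrightarrow> h 0 * of_real (exp (- x\<^sup>2 / 2))"
        by (intro tendsto_intros)
    qed
    show "AE x in lborel. norm (h (\<sigma> n * x) * of_real (exp (- x\<^sup>2 / 2))) \<le> B * exp (- x\<^sup>2 / 2)" for n
      by (intro AE_I2) (simp add: norm_mult h_bounded mult_right_mono)
  qed simp_all
  have "(\<integral>t. H t \<partial>lborel) = of_real (sqrt (2 * pi)) * (\<integral>x. h 0 * of_real (exp (- x\<^sup>2 / 2)) \<partial>lborel)"
    using damped_H unfolding integral_Fourier_transform_Gaussian_damped[OF \<sigma>_pos h H]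
    by (rule LIMSEQ_unique[OF _ tendsto_mult_left[OF damped_h]])
  also have "\<dots> = of_real (sqrt (2 * pi) * sqrt (2 * pi)) * h 0"
    by (simp only: integral_mult_right_zero integral_complex_of_real integral_Gaussian of_real_mult mult_ac)
  finally show ?thesis by simp
qed

section \<open>The Cahen--Mellin integral\<close>

lemma power_div_fact_le_exp:
  fixes x :: real
  assumes "x \<ge> 0"
  shows "x ^ n / fact n \<le> exp x"
proof -
  have "(\<lambda>k. x ^ k / fact k) sums exp x"
    using exp_converges[of x] by (simp add: divide_inverse scaleR_conv_of_real mult.commute)
  with assms have "sum (\<lambda>k. x ^ k / fact k) {n} \<le> suminf (\<lambda>k. x ^ k / fact k)"
    by (intro sum_le_suminf) (auto simp: sums_iff)
  with \<open>(\<lambda>k. x ^ k / fact k) sums exp x\<close> show ?thesis by (simp add: sums_iff)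
qed

lemma powr_mult_exp_neg_bounded:
  fixes \<gamma> a :: real
  assumes \<gamma>: "\<gamma> > 0" and a: "a > 0"
  obtains B where "\<And>v. v > 0 \<Longrightarrow> v powr \<gamma> * exp (- a * v) \<le> B"
proof
  define N where "N = nat \<lceil>\<gamma>\<rceil>"
  fix v :: real
  assume v: "v > 0"
  have "v powr \<gamma> \<le> 1 + v ^ N"
  proof (cases "v \<le> 1")
    case True
    then have "v powr \<gamma> \<le> 1" using v \<gamma> by (intro powr_le1) auto
    then show ?thesis using zero_le_power[of v N] v by linarith
  next
    case False
    have "\<gamma> \<le> real N" using \<gamma> by (simp add: N_def)
    then have "v powr \<gamma> \<le> v powr real N" using False by (intro powr_mono) auto
    then show ?thesis using v by (simp add: powr_realpow)
  qed
  then have "v powr \<gamma> * exp (- a * v) \<le> exp (- a * v) + v ^ N * exp (- a * v)"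
    by (metis distrib_right exp_ge_zero mult_1 mult_right_mono)
  moreover have "(a * v) ^ N / fact N \<le> exp (a * v)"
    using a v by (intro power_div_fact_le_exp) simp
  then have "v ^ N * exp (- a * v) \<le> fact N / a ^ N"
    using a by (simp add: exp_minus power_mult_distrib field_simps)
  moreover have "exp (- a * v) \<le> 1" using a v by simp
  ultimately show "v powr \<gamma> * exp (- a * v) \<le> 1 + fact N / a ^ N"
    by linarith
qed

lemma Gamma_integral_exp_substitution:
  fixes z \<xi> :: complex
  assumes z: "Re z > 0" and \<xi>: "Re \<xi> > 0"
  shows "integrable lborel (\<lambda>w. exp (\<xi> * of_real w) * exp (- z * of_real (exp w)))"
    and "(\<integral>w. exp (\<xi> * of_real w) * exp (- z * of_real (exp w)) \<partial>lborel) = Gamma \<xi> * z powr (- \<xi>)"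
proof -
  define f where "f v = of_real v powr (\<xi> - 1) * exp (- z * of_real v)" for v :: real
  have range_exp: "exp ` UNIV = ({0<..} :: real set)"
    by (auto simp: image_iff intro: exp_ln[symmetric])
  have f_abs: "f absolutely_integrable_on exp ` UNIV" and f_integral: "integral (exp ` UNIV) f = Gamma \<xi> * z powr (- \<xi>)"
    using Gamma_integral_complex_scale[OF z \<xi>] unfolding f_def[abs_def] range_exp
    by (simp_all add: integral_unique)
  have f_exp: "\<bar>exp w\<bar> *\<^sub>R f (exp w) = exp (\<xi> * of_real w) * exp (- z * of_real (exp w))" for w :: real
  proof -
    have "of_real (exp w) powr (\<xi> - 1) = exp ((\<xi> - 1) * of_real w)"
      by (simp add: powr_def exp_of_real[symmetric] Ln_of_real)
    then show ?thesis
      by (simp add: f_def scaleR_conv_of_real exp_of_real[symmetric] mult.assoc[symmetric] algebra_simps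
          flip: exp_add)
  qed
  have "(\<lambda>w. \<bar>exp w\<bar> *\<^sub>R f (exp w)) absolutely_integrable_on UNIV \<and>
        integral UNIV (\<lambda>w. \<bar>exp w\<bar> *\<^sub>R f (exp w)) = Gamma \<xi> * z powr (- \<xi>)"
    using f_abs f_integral
    by (subst has_absolute_integral_change_of_variables_real[where g=exp and h=exp])
       (auto intro!: derivative_eq_intros inj_onI)
  then have abs: "(\<lambda>w. exp (\<xi> * of_real w) * exp (- z * of_real (exp w))) absolutely_integrable_on UNIV"
    and val: "integral UNIV (\<lambda>w. exp (\<xi> * of_real w) * exp (- z * of_real (exp w))) = Gamma \<xi> * z powr (- \<xi>)"
    unfolding f_exp by auto
  have m: "set_borel_measurable borel UNIV (\<lambda>w. exp (\<xi> * of_real w) * exp (- z * of_real (exp w)))"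
    unfolding set_borel_measurable_def by (simp add: borel_measurable_continuous_onI continuous_intros)
  show "integrable lborel (\<lambda>w. exp (\<xi> * of_real w) * exp (- z * of_real (exp w)))"
    using set_borel_integral_eq_integral(1)[OF abs m] by (simp add: set_integrable_def)
  show "(\<integral>w. exp (\<xi> * of_real w) * exp (- z * of_real (exp w)) \<partial>lborel) = Gamma \<xi> * z powr (- \<xi>)"
    using set_borel_integral_eq_integral(2)[OF abs m] val by (simp add: set_lebesgue_integral_def)
qed

theorem Cahen_Mellin_integral:
  fixes \<gamma> :: real and z :: complex
  assumes \<gamma>: "\<gamma> > 0" and z: "Re z > 0"
  shows "(\<integral>t. Gamma (Complex \<gamma> t) * z powr (- Complex \<gamma> t) \<partial>lborel) = of_real (2 * pi) * exp (- z)"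
proof -
  \<comment> \<open>After \<open>v = e^w\<close>, the integrand is the Fourier transform of \<open>h(w) = e^(\<gamma> w) exp(-z e^w)\<close>.\<close>
  define h where "h w = exp (of_real \<gamma> * of_real w) * exp (- z * of_real (exp w))" for w :: real
  obtain B where B: "\<And>v. v > 0 \<Longrightarrow> v powr \<gamma> * exp (- Re z * v) \<le> B"
    using powr_mult_exp_neg_bounded[OF \<gamma> z] by blast
  have "norm (h w) = exp w powr \<gamma> * exp (- Re z * exp w)" for w
    by (simp add: h_def norm_mult powr_def)
  then have h_bounded: "norm (h w) \<le> B" for w
    using B[of "exp w"] by simp
  have H: "Gamma (Complex \<gamma> t) * z powr (- Complex \<gamma> t) = (\<integral>w. exp (\<i> * of_real (t * w)) * h w \<partial>lborel)" for t
  proof -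
    have "(\<lambda>w. exp (\<i> * of_real (t * w)) * h w) = (\<lambda>w. exp (Complex \<gamma> t * of_real w) * exp (- z * of_real (exp w)))"
      by (auto simp: fun_eq_iff h_def Complex_eq exp_add[symmetric] algebra_simps)
    then show ?thesis
      using Gamma_integral_exp_substitution(2)[OF z, of "Complex \<gamma> t"] \<gamma> by simp
  qed
  have "(\<integral>t. Gamma (Complex \<gamma> t) * z powr (- Complex \<gamma> t) \<partial>lborel) = of_real (2 * pi) * h 0"
  proof (rule Fourier_inversion_at_zero[OF _ h_bounded _ H integrable_Gamma_vertical_line[OF \<gamma> z]])
    show "integrable lborel h"
      unfolding h_def using Gamma_integral_exp_substitution(1)[OF z, of "of_real \<gamma>"] \<gamma> by simp
    show "isCont h 0"
      unfolding h_def by (intro continuous_intros)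
  qed
  then show ?thesis by (simp add: h_def)
qed

section \<open>A Laplace-transform representation of the Fox H-function\<close>

lemma powr_mult_powr_of_real_neg:
  fixes K B \<xi> :: complex and \<alpha> :: real
  assumes K: "Re K > 0" and B: "B \<noteq> 0" and \<alpha>: "\<alpha> > 0" and Arg_B: "\<bar>Arg B\<bar> < pi / \<alpha>"
  shows "(K * B powr of_real (- \<alpha> / 2)) powr (- \<xi>) = K powr (- \<xi>) * B powr (of_real (\<alpha> / 2) * \<xi>)"
proof -
  \<comment> \<open>Both \<open>Ln K\<close> and \<open>Ln (B^(-\<alpha>/2))\<close> have imaginary part in \<open>(-\<pi>/2, \<pi>/2)\<close>, so the logarithm of the product splits.\<close>
  define w where "w = B powr of_real (- \<alpha> / 2)"
  have K0: "K \<noteq> 0" using K by auto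
  have w: "w = exp (- of_real (\<alpha> / 2) * Ln B)"
    using B by (simp add: w_def powr_def)
  have Im_eq: "Im (- of_real (\<alpha> / 2) * Ln B) = - (\<alpha> / 2 * Arg B)"
    using B by (simp add: Arg_eq_Im_Ln)
  have Arg_w: "\<bar>\<alpha> / 2 * Arg B\<bar> < pi / 2"
    using Arg_B \<alpha> by (simp add: abs_mult field_simps)
  then have Ln_w: "Ln w = - of_real (\<alpha> / 2) * Ln B"
    unfolding w using pi_gt_zero by (intro Ln_exp) (unfold Im_eq; arith)+
  have w0: "w \<noteq> 0" by (simp add: w)
  have Ln_Kw: "Ln (K * w) = Ln K + Ln w"
  proof (rule Ln_times_simple)
    show "- pi < Im (Ln K) + Im (Ln w)" and "Im (Ln K) + Im (Ln w) \<le> pi"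
      using Re_Ln_pos_lt_imp[OF K] Arg_w unfolding Ln_w Im_eq by arith+
  qed (simp_all add: K0 w)
  have "(K * w) powr (- \<xi>) = exp (- \<xi> * Ln K + (of_real (\<alpha> / 2) * \<xi>) * Ln B)"
    using K0 w0 by (simp add: powr_def Ln_Kw Ln_w algebra_simps)
  then show ?thesis
    using B K0 by (simp add: w_def powr_def exp_add[symmetric])
qed

text \<open>Integrand of the double integral \<open>\<integral>\<integral> \<Gamma>(\<xi>) K^(-\<xi>) u^(-\<alpha>\<xi>/2) e^(-B u) dt du\<close>,
  \<open>\<xi> = mb_line \<alpha> t\<close>: integrating in \<open>t\<close> gives \<open>2\<pi> e^(-B u) e^(-K u^(\<alpha>/2))\<close> by the Cahen--Mellin
  integral, integrating in \<open>u\<close> gives the Mellin--Barnes integrand of \<open>foxH11\<close> divided by \<open>B\<close>.\<close>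
definition foxH11_Laplace_integrand :: "real \<Rightarrow> complex \<Rightarrow> complex \<Rightarrow> real \<Rightarrow> real \<Rightarrow> complex" where
  "foxH11_Laplace_integrand \<alpha> K B t u = indicator {0<..} u *\<^sub>R
     (Gamma (mb_line \<alpha> t) * K powr (- mb_line \<alpha> t)
       * (of_real u powr (- of_real (\<alpha> / 2) * mb_line \<alpha> t) * exp (- B * of_real u)))"

lemma Re_mult_mb_line: "\<alpha> \<noteq> 0 \<Longrightarrow> Re (of_real (\<alpha> / 2) * mb_line \<alpha> t) = 1 / 2"
  by (simp add: mb_line_def)

lemma integrable_foxH11_Laplace_integrand:
  fixes \<alpha> :: real and K B :: complex
  assumes \<alpha>: "\<alpha> > 0" and K: "Re K > 0" and B: "Re B > 0"
  shows "integrable (lborel \<Otimes>\<^sub>M lborel) (case_prod (foxH11_Laplace_integrand \<alpha> K B))"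
proof -
  define A where "A t = Gamma (mb_line \<alpha> t) * K powr (- mb_line \<alpha> t)" for t
  have A_cont: "continuous_on UNIV A"
    using continuous_on_Gamma_vertical_line[of "1 / \<alpha>" K] \<alpha> K by (fastforce simp: A_def mb_line_def)
  have A_int: "integrable lborel (\<lambda>t. norm (A t))"
    using integrable_Gamma_vertical_line[of "1 / \<alpha>" K] \<alpha> K by (simp add: A_def mb_line_def)
  define G where "G p = A (fst p) * (exp (- of_real (\<alpha> / 2) * mb_line \<alpha> (fst p) * of_real (ln (snd p)))
    * exp (- B * of_real (snd p)))" for p :: "real \<times> real"
  have "continuous_on (UNIV \<times> {0<..}) G"
    unfolding G_def mb_line_def Complex_eq
    by (intro continuous_intros continuous_on_compose2[OF A_cont]) auto
  then have "(\<lambda>p. indicator (UNIV \<times> {0<..}) p *\<^sub>R G p) \<in> borel_measurable borel"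
    by (intro borel_measurable_continuous_on_indicator) (auto intro!: borel_open open_Times)
  then have "(\<lambda>p. indicator (UNIV \<times> {0<..}) p *\<^sub>R G p) \<in> borel_measurable (lborel \<Otimes>\<^sub>M lborel)"
    by (simp add: lborel_prod)
  moreover have "case_prod (foxH11_Laplace_integrand \<alpha> K B) = (\<lambda>p. indicator (UNIV \<times> {0<..}) p *\<^sub>R G p)"
    by (auto simp: fun_eq_iff foxH11_Laplace_integrand_def G_def A_def indicator_def powr_def Ln_of_real)
  ultimately have F_measurable: "case_prod (foxH11_Laplace_integrand \<alpha> K B) \<in> borel_measurable (lborel \<Otimes>\<^sub>M lborel)"
    by simp
  define b where "b u = indicator {0<..} u * (u powr (- 1 / 2) * exp (- Re B * u))" for u :: real
  have b_int: "integrable lborel b"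
  proof -
    define g where "g v = of_real v powr (complex_of_real (1 / 2) - 1) * exp (- of_real (Re B) * of_real v)" for v :: real
    have "g absolutely_integrable_on {0<..}"
      unfolding g_def by (rule Gamma_integral_complex_scale(1)) (use B in auto)
    moreover have "continuous_on {0<..} g"
      by (rule continuous_on_eq[of _ "\<lambda>v. exp ((complex_of_real (1 / 2) - 1) * of_real (ln v)) * exp (- of_real (Re B) * of_real v)"])
         (auto simp: g_def powr_def Ln_of_real intro!: continuous_intros)
    then have "set_borel_measurable borel {0<..} g"
      unfolding set_borel_measurable_def by (intro borel_measurable_continuous_on_indicator) simp_all
    ultimately have "integrable lborel (\<lambda>u. norm (indicator {0<..} u *\<^sub>R g u))"
      using set_borel_integral_eq_integral(1) unfolding set_integrable_def by (intro integrable_norm)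
    moreover have "norm (indicator {0<..} u *\<^sub>R g u) = b u" for u
      by (cases "u > 0") (auto simp: b_def g_def norm_mult norm_powr_real_powr indicator_def)
    ultimately show ?thesis by simp
  qed
  show ?thesis
  proof (rule integrable_pair_measure_product_bound[OF _ _ F_measurable A_int b_int])
    fix t u :: real
    show "norm (case_prod (foxH11_Laplace_integrand \<alpha> K B) (t, u)) \<le> norm (A t) * b u"
      using Re_mult_mb_line[of \<alpha> t] \<alpha>
      by (cases "u > 0") (auto simp: foxH11_Laplace_integrand_def A_def b_def norm_mult norm_powr_real_powr)
  qed (simp_all add: sigma_finite_lborel)
qed

lemma integral_foxH11_Laplace_integrand_fst:
  fixes \<alpha> t :: real and K B :: complex
  assumes \<alpha>: "\<alpha> > 0" and B: "Re B > 0"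
  defines "\<xi> \<equiv> mb_line \<alpha> t"
  shows "(\<integral>u. foxH11_Laplace_integrand \<alpha> K B t u \<partial>lborel)
    = Gamma \<xi> * K powr (- \<xi>) * (Gamma (1 - of_real (\<alpha> / 2) * \<xi>) * B powr (- (1 - of_real (\<alpha> / 2) * \<xi>)))"
proof -
  define \<eta> where "\<eta> = 1 - of_real (\<alpha> / 2) * \<xi>"
  have \<eta>: "Re \<eta> > 0" using Re_mult_mb_line[of \<alpha> t] \<alpha> by (simp add: \<eta>_def \<xi>_def)
  define g where "g u = of_real u powr (\<eta> - 1) * exp (- B * of_real u)" for u :: real
  have g_abs: "g absolutely_integrable_on {0<..}" and g_has_integral: "(g has_integral Gamma \<eta> * B powr (- \<eta>)) {0<..}"
    unfolding g_def using Gamma_integral_complex_scale[OF B \<eta>] by auto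
  have g_integral: "integral {0<..} g = Gamma \<eta> * B powr (- \<eta>)"
    using g_has_integral by (rule integral_unique)
  have "continuous_on {0<..} g"
    by (rule continuous_on_eq[of _ "\<lambda>v. exp ((\<eta> - 1) * of_real (ln v)) * exp (- B * of_real v)"])
       (auto simp: g_def powr_def Ln_of_real intro!: continuous_intros)
  then have g_measurable: "set_borel_measurable borel {0<..} g"
    unfolding set_borel_measurable_def by (intro borel_measurable_continuous_on_indicator) simp_all
  have "(\<lambda>u. foxH11_Laplace_integrand \<alpha> K B t u) = (\<lambda>u. Gamma \<xi> * K powr (- \<xi>) * (indicator {0<..} u *\<^sub>R g u))"
    by (auto simp: fun_eq_iff foxH11_Laplace_integrand_def g_def \<eta>_def \<xi>_def indicator_def)
  then have "(\<integral>u. foxH11_Laplace_integrand \<alpha> K B t u \<partial>lborel) = Gamma \<xi> * K powr (- \<xi>) * (LINT u:{0<..}|lborel. g u)"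
    by (simp only: integral_mult_right_zero set_lebesgue_integral_def)
  then show ?thesis
    using set_borel_integral_eq_integral(2)[OF g_abs g_measurable] g_integral by (simp add: \<eta>_def)
qed

lemma integral_foxH11_Laplace_integrand_snd:
  fixes \<alpha> :: real and K B :: complex
  assumes \<alpha>: "\<alpha> > 0" and K: "Re K > 0"
  shows "(\<integral>t. foxH11_Laplace_integrand \<alpha> K B t u \<partial>lborel)
    = indicator {0<..} u *\<^sub>R (of_real (2 * pi) * (exp (- B * of_real u) * exp (- K * of_real (u powr (\<alpha> / 2)))))"
proof (cases "u > 0")
  case True
  define z where "z = K * of_real (u powr (\<alpha> / 2))"
  have z: "Re z > 0" using K True by (simp add: z_def)
  have kernel: "K powr (- mb_line \<alpha> t) * of_real u powr (- of_real (\<alpha> / 2) * mb_line \<alpha> t) = z powr (- mb_line \<alpha> t)" for t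
  proof -
    have "z powr (- mb_line \<alpha> t) = of_real (u powr (\<alpha> / 2)) powr (- mb_line \<alpha> t) * K powr (- mb_line \<alpha> t)"
      unfolding z_def by (subst mult.commute) (rule powr_times_real_left, auto)
    also have "of_real (u powr (\<alpha> / 2)) powr (- mb_line \<alpha> t) = of_real u powr (- of_real (\<alpha> / 2) * mb_line \<alpha> t)"
      using True by (simp add: powr_def Ln_of_real ln_powr algebra_simps)
    finally show ?thesis by simp
  qed
  have "foxH11_Laplace_integrand \<alpha> K B t u = exp (- B * of_real u) * (Gamma (mb_line \<alpha> t) * z powr (- mb_line \<alpha> t))" for t
    unfolding kernel[symmetric] using True by (simp add: foxH11_Laplace_integrand_def mult_ac)
  then have "(\<integral>t. foxH11_Laplace_integrand \<alpha> K B t u \<partial>lborel)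
      = exp (- B * of_real u) * (\<integral>t. Gamma (Complex (1 / \<alpha>) t) * z powr (- Complex (1 / \<alpha>) t) \<partial>lborel)"
    by (simp only: mb_line_def integral_mult_right_zero)
  also have "\<dots> = exp (- B * of_real u) * (of_real (2 * pi) * exp (- z))"
    using Cahen_Mellin_integral[of "1 / \<alpha>" z] \<alpha> z by simp
  finally show ?thesis using True by (simp add: z_def mult_ac)
qed (simp add: foxH11_Laplace_integrand_def)

lemma Laplace_transform_eq_foxH11_pos:
  fixes \<alpha> :: real and K B :: complex
  assumes \<alpha>: "\<alpha> > 0" and K: "Re K > 0" and B: "Re B > 0" and Arg_B: "\<bar>Arg B\<bar> < pi / \<alpha>"
  shows "set_integrable lborel {0<..} (\<lambda>u. exp (- B * of_real u) * exp (- K * of_real (u powr (\<alpha> / 2))))"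
    and "(LINT u:{0<..}|lborel. exp (- B * of_real u) * exp (- K * of_real (u powr (\<alpha> / 2))))
         = foxH11 \<alpha> (K * B powr of_real (- \<alpha> / 2)) / B"
proof -
  define F where "F = foxH11_Laplace_integrand \<alpha> K B"
  define f where "f u = exp (- B * of_real u) * exp (- K * of_real (u powr (\<alpha> / 2)))" for u :: real
  have F_int: "integrable (lborel \<Otimes>\<^sub>M lborel) (case_prod F)"
    unfolding F_def by (rule integrable_foxH11_Laplace_integrand[OF \<alpha> K B])
  have F_snd: "(\<integral>t. F t u \<partial>lborel) = indicator {0<..} u *\<^sub>R (of_real (2 * pi) * f u)" for u
    unfolding F_def f_def by (rule integral_foxH11_Laplace_integrand_snd[OF \<alpha> K])
  have "integrable lborel (\<lambda>u. \<integral>t. F t u \<partial>lborel)"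
    by (rule lborel_pair.integrable_snd[OF F_int])
  then have "set_integrable lborel {0<..} (\<lambda>u. of_real (2 * pi) * f u)"
    unfolding set_integrable_def F_snd .
  then show f_int: "set_integrable lborel {0<..} f"
    by simp
  define y where "y = K * B powr of_real (- \<alpha> / 2)"
  have B0: "B \<noteq> 0" using B by auto
  have "y \<noteq> 0" using K B0 by (auto simp: y_def powr_def)
  then have "foxH11 \<alpha> y = (1 / (2 * pi)) *\<^sub>R
      (\<integral>t. Gamma (mb_line \<alpha> t) * Gamma (1 - of_real (\<alpha> / 2) * mb_line \<alpha> t) * y powr - mb_line \<alpha> t \<partial>lborel)"
    by (simp add: foxH11_def)
  also have "\<dots> = (1 / (2 * pi)) *\<^sub>R (B * (\<integral>t. (\<integral>u. F t u \<partial>lborel) \<partial>lborel))"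
  proof -
    have "Gamma (mb_line \<alpha> t) * Gamma (1 - of_real (\<alpha> / 2) * mb_line \<alpha> t) * y powr - mb_line \<alpha> t
        = B * (\<integral>u. F t u \<partial>lborel)" for t
    proof -
      have "y powr - mb_line \<alpha> t = K powr (- mb_line \<alpha> t) * B powr (of_real (\<alpha> / 2) * mb_line \<alpha> t)"
        unfolding y_def by (rule powr_mult_powr_of_real_neg[OF K B0 \<alpha> Arg_B])
      moreover have "B powr (- (1 - of_real (\<alpha> / 2) * mb_line \<alpha> t)) = B powr (of_real (\<alpha> / 2) * mb_line \<alpha> t) / B"
        using powr_diff[of B "of_real (\<alpha> / 2) * mb_line \<alpha> t" 1] B0 by (simp add: algebra_simps)
      ultimately show ?thesis
        unfolding F_def integral_foxH11_Laplace_integrand_fst[OF \<alpha> B] using B0 by (simp add: field_simps)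
    qed
    then show ?thesis
      by (simp only: integral_mult_right_zero)
  qed
  also have "\<dots> = (1 / (2 * pi)) *\<^sub>R (B * (\<integral>u. (\<integral>t. F t u \<partial>lborel) \<partial>lborel))"
    by (simp only: lborel_pair.Fubini_integral[OF F_int])
  also have "\<dots> = (1 / (2 * pi)) *\<^sub>R (B * (LINT u:{0<..}|lborel. of_real (2 * pi) * f u))"
    by (simp only: F_snd set_lebesgue_integral_def)
  also have "\<dots> = B * (LINT u:{0<..}|lborel. f u)"
    by (simp add: set_integral_mult_right scaleR_conv_of_real)
  finally show "(LINT u:{0<..}|lborel. f u) = foxH11 \<alpha> y / B"
    using B0 by (simp add: field_simps)
qed

lemma foxH11_0: "foxH11 \<alpha> 0 = 1"
  by (simp add: foxH11_def)

lemma Laplace_transform_eq_foxH11: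
  fixes \<alpha> :: real and K B :: complex
  assumes \<alpha>: "\<alpha> > 0" and K: "Re K > 0 \<or> K = 0" and B: "Re B > 0" and Arg_B: "\<bar>Arg B\<bar> < pi / \<alpha>"
  shows "set_integrable lborel {0<..} (\<lambda>u. exp (- B * of_real u) * exp (- K * of_real (u powr (\<alpha> / 2))))"
    and "(LINT u:{0<..}|lborel. exp (- B * of_real u) * exp (- K * of_real (u powr (\<alpha> / 2))))
         = foxH11 \<alpha> (K * B powr of_real (- \<alpha> / 2)) / B"
proof -
  have "set_integrable lborel {0<..} (\<lambda>u. exp (- B * of_real u) * exp (- K * of_real (u powr (\<alpha> / 2)))) \<and>
      (LINT u:{0<..}|lborel. exp (- B * of_real u) * exp (- K * of_real (u powr (\<alpha> / 2))))
         = foxH11 \<alpha> (K * B powr of_real (- \<alpha> / 2)) / B"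
  proof (cases "K = 0")
    case True
    \<comment> \<open>Then the argument of \<open>foxH11\<close> is \<open>0\<close>, where the definition sets its value to \<open>1\<close>.\<close>
    define g where "g v = of_real v powr (1 - 1) * exp (- B * of_real v)" for v :: real
    have g_abs: "g absolutely_integrable_on {0<..}" and "(g has_integral Gamma 1 * B powr (- 1)) {0<..}"
      unfolding g_def using Gamma_integral_complex_scale[OF B, of 1] by auto
    then have "integral {0<..} g = 1 / B"
      by (simp add: integral_unique powr_minus divide_inverse)
    moreover have "continuous_on {0<..} g"
      by (rule continuous_on_eq[of _ "\<lambda>v. exp (- B * of_real v)"]) (auto simp: g_def intro!: continuous_intros)
    then have "set_borel_measurable borel {0<..} g"
      unfolding set_borel_measurable_def by (intro borel_measurable_continuous_on_indicator) simp_all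
    moreover have "(\<lambda>u. indicator {0<..} u *\<^sub>R g u)
        = (\<lambda>u. indicator {0<..} u *\<^sub>R (exp (- B * of_real u) * exp (- K * of_real (u powr (\<alpha> / 2)))))"
      using True by (auto simp: fun_eq_iff g_def indicator_def)
    ultimately show ?thesis
      using set_borel_integral_eq_integral[OF g_abs] True
      unfolding set_integrable_def set_lebesgue_integral_def by (simp add: foxH11_0)
  next
    case False
    with K show ?thesis
      using Laplace_transform_eq_foxH11_pos[OF \<alpha> _ B Arg_B] by auto
  qed
  then show "set_integrable lborel {0<..} (\<lambda>u. exp (- B * of_real u) * exp (- K * of_real (u powr (\<alpha> / 2))))"
    and "(LINT u:{0<..}|lborel. exp (- B * of_real u) * exp (- K * of_real (u powr (\<alpha> / 2))))
         = foxH11 \<alpha> (K * B powr of_real (- \<alpha> / 2)) / B"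
    by auto
qed

section \<open>The larger of two independent distances\<close>

lemma integral_indep_distributed_pair:
  fixes M :: "'a measure" and X Y :: "'a \<Rightarrow> real" and p q :: "real \<Rightarrow> real"
    and g :: "real \<times> real \<Rightarrow> 'b::{banach, second_countable_topology}"
  assumes "prob_space M"
    and X: "distributed M lborel X (\<lambda>x. ennreal (p x))" and Y: "distributed M lborel Y (\<lambda>y. ennreal (q y))"
    and indep: "prob_space.indep_var M borel X borel Y"
    and p: "\<And>x. p x \<ge> 0" and q: "\<And>y. q y \<ge> 0"
    and g[measurable]: "g \<in> borel_measurable (lborel \<Otimes>\<^sub>M lborel)"
  shows "(LINT w|M. g (X w, Y w)) = (\<integral>z. (p (fst z) * q (snd z)) *\<^sub>R g z \<partial>(lborel \<Otimes>\<^sub>M lborel))"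
proof -
  interpret prob_space M by fact
  have [measurable]: "p \<in> borel_measurable borel" "q \<in> borel_measurable borel"
    using distributed_real_measurable[OF _ X] distributed_real_measurable[OF _ Y] p q by auto
  have "indep_var lborel X lborel Y"
    using indep unfolding indep_var_def indep_vars_def by (simp add: bool.case_eq_if)
  then have XY: "distributed M (lborel \<Otimes>\<^sub>M lborel) (\<lambda>w. (X w, Y w)) (\<lambda>(x, y). ennreal (p x) * ennreal (q y))"
    by (intro distributed_joint_indep[OF _ _ X Y]) (simp_all add: sigma_finite_lborel)
  have density: "(\<lambda>(x, y). ennreal (p x) * ennreal (q y)) = (\<lambda>z. ennreal (p (fst z) * q (snd z)))"
    using p q by (auto simp: fun_eq_iff ennreal_mult)
  have "(LINT w|M. g (X w, Y w)) = integral\<^sup>L (distr M (lborel \<Otimes>\<^sub>M lborel) (\<lambda>w. (X w, Y w))) g"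
    by (subst integral_distr[OF distributed_measurable[OF XY] g]) simp
  also have "\<dots> = integral\<^sup>L (density (lborel \<Otimes>\<^sub>M lborel) (\<lambda>z. ennreal (p (fst z) * q (snd z)))) g"
    using distributed_distr_eq_density[OF XY] by (simp add: density)
  also have "\<dots> = (\<integral>z. (p (fst z) * q (snd z)) *\<^sub>R g z \<partial>(lborel \<Otimes>\<^sub>M lborel))"
    by (subst integral_density) (auto simp: p q)
  finally show ?thesis .
qed

lemma integrable_product_density_bounded:
  fixes p :: "real \<Rightarrow> real" and G :: "real \<times> real \<Rightarrow> 'b::{banach, second_countable_topology}" and C :: real
  assumes p_int: "integrable lborel p" and p: "\<And>x. p x \<ge> 0"
    and G: "G \<in> borel_measurable (lborel \<Otimes>\<^sub>M lborel)" and G_bounded: "\<And>z. norm (G z) \<le> C"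
  shows "integrable (lborel \<Otimes>\<^sub>M lborel) (\<lambda>z. (p (fst z) * p (snd z)) *\<^sub>R G z)"
proof (rule integrable_pair_measure_product_bound[where a="\<lambda>x. C * p x" and b=p])
  have [measurable]: "p \<in> borel_measurable borel" using p_int by auto
  show "(\<lambda>z. (p (fst z) * p (snd z)) *\<^sub>R G z) \<in> borel_measurable (lborel \<Otimes>\<^sub>M lborel)"
    using G by measurable
  show "norm ((p (fst (x, y)) * p (snd (x, y))) *\<^sub>R G (x, y)) \<le> C * p x * p y" for x y
    using mult_left_mono[OF G_bounded[of "(x, y)"], of "p x * p y"] p by (simp add: mult_ac)
qed (use p_int in \<open>simp_all add: sigma_finite_lborel\<close>)

lemma integral_max_product_density:
  fixes p F :: "real \<Rightarrow> real" and \<Phi> :: "real \<Rightarrow> 'b::{banach, second_countable_topology}" and C :: real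
  assumes p_int: "integrable lborel p" and p: "\<And>x. p x \<ge> 0"
    and cdf: "\<And>x. (\<integral>y. indicator {..x} y * p y \<partial>lborel) = F x"
    and \<Phi>[measurable]: "\<Phi> \<in> borel_measurable borel" and \<Phi>_bounded: "\<And>x. norm (\<Phi> x) \<le> C"
  shows "(\<integral>z. (p (fst z) * p (snd z)) *\<^sub>R \<Phi> (max (fst z) (snd z)) \<partial>(lborel \<Otimes>\<^sub>M lborel))
    = (\<integral>x. (2 * p x * F x) *\<^sub>R \<Phi> x \<partial>lborel)"
proof -
  \<comment> \<open>Split the plane along the diagonal; each half contributes \<open>\<integral> p(x) F(x) \<Phi>(x) dx\<close> (the diagonal is a null set).\<close>
  have [measurable]: "p \<in> borel_measurable borel" using p_int by auto
  have cdf_less: "(\<integral>y. indicator {..<x} y * p y \<partial>lborel) = F x" for x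
  proof -
    have "AE y in lborel. indicator {..<x} y * p y = indicator {..x} y * p y"
      using AE_lborel_singleton[of x] by eventually_elim (auto simp: indicator_def)
    then show ?thesis
      using cdf[of x] by (subst integral_cong_AE) auto
  qed
  have p_indicator_int: "integrable lborel (\<lambda>y. indicator A y * p y)" if "A \<in> sets borel" for A
    using integrable_real_mult_indicator[OF _ p_int] that by (simp add: mult.commute)
  define H1 where "H1 x y = (if y \<le> x then (p x * p y) *\<^sub>R \<Phi> x else 0)" for x y :: real
  define H2 where "H2 x y = (if x < y then (p x * p y) *\<^sub>R \<Phi> y else 0)" for x y :: real
  have "C \<ge> 0" using order_trans[OF norm_ge_zero \<Phi>_bounded] .
  then have "integrable (lborel \<Otimes>\<^sub>M lborel) (\<lambda>z. (p (fst z) * p (snd z)) *\<^sub>R (if snd z \<le> fst z then \<Phi> (fst z) else 0))"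
    and "integrable (lborel \<Otimes>\<^sub>M lborel) (\<lambda>z. (p (fst z) * p (snd z)) *\<^sub>R (if fst z < snd z then \<Phi> (snd z) else 0))"
    using \<Phi>_bounded by (intro integrable_product_density_bounded[OF p_int p, where C=C]; simp)+
  moreover have "case_prod H1 = (\<lambda>z. (p (fst z) * p (snd z)) *\<^sub>R (if snd z \<le> fst z then \<Phi> (fst z) else 0))"
    and "case_prod H2 = (\<lambda>z. (p (fst z) * p (snd z)) *\<^sub>R (if fst z < snd z then \<Phi> (snd z) else 0))"
    by (auto simp: fun_eq_iff H1_def H2_def)
  ultimately have H1_int: "integrable (lborel \<Otimes>\<^sub>M lborel) (case_prod H1)"
    and H2_int: "integrable (lborel \<Otimes>\<^sub>M lborel) (case_prod H2)"
    by simp_all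
  have "(\<integral>z. case_prod H1 z \<partial>(lborel \<Otimes>\<^sub>M lborel)) = (\<integral>x. (p x * F x) *\<^sub>R \<Phi> x \<partial>lborel)"
  proof -
    have "(\<integral>y. H1 x y \<partial>lborel) = (\<integral>y. (indicator {..x} y * p y) *\<^sub>R (p x *\<^sub>R \<Phi> x) \<partial>lborel)" for x
      by (rule Bochner_Integration.integral_cong) (auto simp: H1_def indicator_def)
    also have "\<dots> x = (\<integral>y. indicator {..x} y * p y \<partial>lborel) *\<^sub>R (p x *\<^sub>R \<Phi> x)" for x
      by (rule integral_scaleR_left) (simp add: p_indicator_int)
    finally have "(\<integral>y. H1 x y \<partial>lborel) = F x *\<^sub>R (p x *\<^sub>R \<Phi> x)" for x
      by (simp only: cdf)
    then show ?thesis
      using lborel_pair.integral_fst[OF H1_int] by (simp add: mult_ac)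
  qed
  moreover have "(\<integral>z. case_prod H2 z \<partial>(lborel \<Otimes>\<^sub>M lborel)) = (\<integral>x. (p x * F x) *\<^sub>R \<Phi> x \<partial>lborel)"
  proof -
    have "(\<integral>x. H2 x y \<partial>lborel) = (\<integral>x. (indicator {..<y} x * p x) *\<^sub>R (p y *\<^sub>R \<Phi> y) \<partial>lborel)" for y
      by (rule Bochner_Integration.integral_cong) (auto simp: H2_def indicator_def)
    also have "\<dots> y = (\<integral>x. indicator {..<y} x * p x \<partial>lborel) *\<^sub>R (p y *\<^sub>R \<Phi> y)" for y
      by (rule integral_scaleR_left) (simp add: p_indicator_int)
    finally have "(\<integral>x. H2 x y \<partial>lborel) = F y *\<^sub>R (p y *\<^sub>R \<Phi> y)" for y
      by (simp only: cdf_less)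
    then show ?thesis
      using lborel_pair.integral_snd[OF H2_int] by (simp add: mult_ac)
  qed
  moreover have "(\<lambda>z. (p (fst z) * p (snd z)) *\<^sub>R \<Phi> (max (fst z) (snd z))) = (\<lambda>z. case_prod H1 z + case_prod H2 z)"
    by (auto simp: fun_eq_iff H1_def H2_def max_def)
  ultimately have "(\<integral>z. (p (fst z) * p (snd z)) *\<^sub>R \<Phi> (max (fst z) (snd z)) \<partial>(lborel \<Otimes>\<^sub>M lborel))
      = 2 *\<^sub>R (\<integral>x. (p x * F x) *\<^sub>R \<Phi> x \<partial>lborel)"
    using Bochner_Integration.integral_add[OF H1_int H2_int] by (simp add: scaleR_2)
  also have "\<dots> = (\<integral>x. (2 * p x * F x) *\<^sub>R \<Phi> x \<partial>lborel)"
    by (simp flip: integral_scaleR_right add: mult.assoc)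
  finally show ?thesis .
qed

lemma dist_density_nonneg: "c > 0 \<Longrightarrow> lb > 0 \<Longrightarrow> dist_density c lb x \<ge> 0"
  by (simp add: dist_density_def)

lemma dist_density_cdf:
  "(\<integral>y. indicator {..x} y * dist_density c lb y \<partial>lborel)
     = (if 0 \<le> x then 1 - exp (- c * lb * pi * x\<^sup>2) else 0)"
proof (cases "0 \<le> x")
  case True
  have "(\<integral>y. indicator {..x} y * dist_density c lb y \<partial>lborel)
      = (\<integral>y. indicator {0..x} y *\<^sub>R (2 * c * lb * pi * y * exp (- c * lb * pi * y\<^sup>2)) \<partial>lborel)"
    by (rule Bochner_Integration.integral_cong) (auto simp: dist_density_def indicator_def)
  also have "\<dots> = (- exp (- c * lb * pi * x\<^sup>2)) - (- exp (- c * lb * pi * 0\<^sup>2))"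
  proof (rule integral_FTC_atLeastAtMost[OF True])
    fix y :: real
    show "((\<lambda>y. - exp (- c * lb * pi * y\<^sup>2)) has_vector_derivative 2 * c * lb * pi * y * exp (- c * lb * pi * y\<^sup>2))
        (at y within {0..x})"
      by (auto intro!: derivative_eq_intros simp: has_real_derivative_iff_has_vector_derivative[symmetric])
  qed (intro continuous_intros)
  finally show ?thesis using True by simp
qed (auto simp: dist_density_def indicator_def intro!: integral_eq_zero_AE)

lemma density_max_dist_density:
  "2 * dist_density c lb x * (if 0 \<le> x then 1 - exp (- c * lb * pi * x\<^sup>2) else 0)
     = indicator {0<..} x * (2 * c * lb * pi) * (2 * x)
       * (exp (- c * lb * pi * x\<^sup>2) - exp (- (2 * c) * lb * pi * x\<^sup>2))"
proof (cases "x > 0")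
  case True
  have "exp (- (2 * c) * lb * pi * x\<^sup>2) = exp (- c * lb * pi * x\<^sup>2) * exp (- c * lb * pi * x\<^sup>2)"
    by (simp flip: exp_add)
  with True show ?thesis
    by (simp add: dist_density_def algebra_simps)
qed (auto simp: dist_density_def)

lemma expectation_max_dist_density:
  fixes M :: "'a measure" and d1 d2 :: "'a \<Rightarrow> real" and c lb :: real and \<Phi> :: "real \<Rightarrow> complex"
  assumes c: "c > 0" and lb: "lb > 0" and "prob_space M"
    and d1: "distributed M lborel d1 (\<lambda>x. ennreal (dist_density c lb x))"
    and d2: "distributed M lborel d2 (\<lambda>x. ennreal (dist_density c lb x))"
    and indep: "prob_space.indep_var M borel d1 borel d2"
    and \<Phi>: "\<Phi> \<in> borel_measurable borel" and \<Phi>_bounded: "\<And>x. norm (\<Phi> x) \<le> 1"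
  shows "(LINT w|M. \<Phi> (max (d1 w) (d2 w))) =
     (\<integral>x. (2 * dist_density c lb x * (if 0 \<le> x then 1 - exp (- c * lb * pi * x\<^sup>2) else 0)) *\<^sub>R \<Phi> x \<partial>lborel)"
proof -
  interpret prob_space M by fact
  have p: "dist_density c lb x \<ge> 0" for x using c lb by (rule dist_density_nonneg)
  have "integrable lborel (dist_density c lb)"
    using distributed_integrable[OF d1, of "\<lambda>x. 1"] p by simp
  moreover have "(\<lambda>z. \<Phi> (max (fst z) (snd z))) \<in> borel_measurable (lborel \<Otimes>\<^sub>M lborel)"
    using \<Phi> by measurable
  ultimately show ?thesis
    using integral_indep_distributed_pair[where g="\<lambda>z. \<Phi> (max (fst z) (snd z))", OF \<open>prob_space M\<close> d1 d2 indep p p]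
      integral_max_product_density[OF _ p dist_density_cdf \<Phi> \<Phi>_bounded]
    by simp
qed

section \<open>The closed form\<close>

lemma set_integral_substitution_square:
  fixes h :: "real \<Rightarrow> 'b::euclidean_space"
  assumes h: "set_integrable lborel {0<..} h" and h_cont: "continuous_on {0<..} h"
  shows "set_integrable lborel {0<..} (\<lambda>x. (2 * x) *\<^sub>R h (x\<^sup>2))"
    and "(LINT x:{0<..}|lborel. (2 * x) *\<^sub>R h (x\<^sup>2)) = (LINT u:{0<..}|lborel. h u)"
proof -
  have h_measurable: "set_borel_measurable borel {0<..} h"
    using borel_measurable_integrable[OF h[unfolded set_integrable_def]]
    unfolding set_borel_measurable_def by simp
  have h_abs: "h absolutely_integrable_on {0<..}"
    using h h_measurable unfolding set_integrable_def set_borel_measurable_def by (simp add: integrable_completion)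
  have "x \<in> (\<lambda>x. x\<^sup>2) ` {0<..}" if "x > 0" for x :: real
    using that by (intro image_eqI[of _ _ "sqrt x"]) auto
  then have img: "(\<lambda>x::real. x\<^sup>2) ` {0<..} = {0<..}"
    by auto
  have inj: "inj_on (\<lambda>x::real. x\<^sup>2) {0<..}"
    by (auto intro!: inj_onI simp: power2_eq_iff)
  have "(\<lambda>x. \<bar>2 * x\<bar> *\<^sub>R h (x\<^sup>2)) absolutely_integrable_on {0<..} \<and>
        integral {0<..} (\<lambda>x. \<bar>2 * x\<bar> *\<^sub>R h (x\<^sup>2)) = b
     \<longleftrightarrow> h absolutely_integrable_on (\<lambda>x. x\<^sup>2) ` {0<..} \<and> integral ((\<lambda>x. x\<^sup>2) ` {0<..}) h = b" for b
    by (rule has_absolute_integral_change_of_variables_real[where g="\<lambda>x. x\<^sup>2" and h="\<lambda>x. 2 * x"])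
       (auto intro!: derivative_eq_intros inj)
  then have abs_sq: "(\<lambda>x. \<bar>2 * x\<bar> *\<^sub>R h (x\<^sup>2)) absolutely_integrable_on {0<..}"
    and integral_sq: "integral {0<..} (\<lambda>x. \<bar>2 * x\<bar> *\<^sub>R h (x\<^sup>2)) = integral {0<..} h"
    unfolding img using h_abs by auto
  have abs_eq: "(2 * x) *\<^sub>R h (x\<^sup>2) = \<bar>2 * x\<bar> *\<^sub>R h (x\<^sup>2)" if "x \<in> {0<..}" for x :: real
    using that by simp
  have sq_integral: "integral {0<..} (\<lambda>x. (2 * x) *\<^sub>R h (x\<^sup>2)) = integral {0<..} h"
    unfolding integral_sq[symmetric] by (rule integral_cong) (rule abs_eq)
  have sq_abs: "(\<lambda>x. (2 * x) *\<^sub>R h (x\<^sup>2)) absolutely_integrable_on {0<..}"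
    using abs_sq negligible_empty by (rule absolutely_integrable_spike) (use abs_eq in blast)
  have "continuous_on {0<..} (\<lambda>x::real. h (x\<^sup>2))"
    by (rule continuous_on_compose2[OF h_cont]) (auto intro!: continuous_intros)
  then have "continuous_on {0<..} (\<lambda>x::real. (2 * x) *\<^sub>R h (x\<^sup>2))"
    by (intro continuous_intros)
  then have sq_measurable: "set_borel_measurable borel {0<..} (\<lambda>x. (2 * x) *\<^sub>R h (x\<^sup>2))"
    unfolding set_borel_measurable_def by (intro borel_measurable_continuous_on_indicator) simp_all
  show "set_integrable lborel {0<..} (\<lambda>x. (2 * x) *\<^sub>R h (x\<^sup>2))"
    by (rule set_borel_integral_eq_integral(1)[OF sq_abs sq_measurable])
  show "(LINT x:{0<..}|lborel. (2 * x) *\<^sub>R h (x\<^sup>2)) = (LINT u:{0<..}|lborel. h u)"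
    unfolding set_borel_integral_eq_integral(2)[OF sq_abs sq_measurable]
      set_borel_integral_eq_integral(2)[OF h_abs h_measurable] by (rule sq_integral)
qed

lemma Arg_powr_of_real:
  fixes s :: complex and p :: real
  assumes s: "Re s > 0" and p: "0 \<le> p" "p \<le> 1"
  shows "Arg (s powr of_real p) = p * Arg s"
proof -
  have s0: "s \<noteq> 0" using s by auto
  have "\<bar>Arg s\<bar> < pi / 2" using s Arg_Re_pos by auto
  moreover have "\<bar>p * Arg s\<bar> \<le> \<bar>Arg s\<bar>"
    using p by (simp add: abs_mult mult_left_le_one_le)
  ultimately have "- pi < p * Arg s" "p * Arg s \<le> pi"
    by linarith+
  then show ?thesis
    using s0 by (simp add: powr_def Arg_exp Arg_eq_Im_Ln)
qed

lemma Re_powr_of_real_pos: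
  fixes s :: complex and p :: real
  assumes s: "Re s > 0" and p: "0 \<le> p" "p \<le> 1"
  shows "Re (s powr of_real p) > 0"
proof -
  have "\<bar>Arg (s powr of_real p)\<bar> \<le> \<bar>Arg s\<bar>"
    using p by (simp add: Arg_powr_of_real[OF s p] abs_mult mult_left_le_one_le)
  also have "\<bar>Arg s\<bar> < pi / 2" using s Arg_Re_pos by auto
  finally have "Re (s powr of_real p) > 0 \<or> s powr of_real p = 0"
    by (simp only: Arg_Re_pos)
  moreover have "s powr of_real p \<noteq> 0" using s by (auto simp: powr_def)
  ultimately show ?thesis by simp
qed

lemma abs_Arg_add_of_real_le:
  fixes w :: complex and r :: real
  assumes w: "Re w > 0" and r: "r \<ge> 0"
  shows "\<bar>Arg (of_real r + w)\<bar> \<le> \<bar>Arg w\<bar>"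
proof -
  have abs_arctan: "\<bar>arctan x\<bar> = arctan \<bar>x\<bar>" for x
    by (cases "x \<ge> 0") (auto simp: arctan_minus zero_le_arctan_iff arctan_less_zero_iff)
  have "\<bar>Im w\<bar> / (r + Re w) \<le> \<bar>Im w\<bar> / Re w"
    using w r by (intro divide_left_mono) auto
  then have "arctan \<bar>Im (of_real r + w) / Re (of_real r + w)\<bar> \<le> arctan \<bar>Im w / Re w\<bar>"
    using w r by (simp add: arctan_le_iff abs_divide)
  then show ?thesis
    using w r by (simp add: arg_conv_arctan abs_arctan add_pos_nonneg)
qed

lemma Arg_scaled_shifted_powr:
  fixes s :: complex and \<alpha> r \<rho> t :: real
  assumes s: "Re s > 0" and \<alpha>: "\<alpha> \<ge> 2" and r: "r \<ge> 0" and \<rho>: "\<rho> > 0" and t: "t > 0"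
  defines "B \<equiv> of_real t * (of_real r + of_real \<rho> * s powr of_real (2 / \<alpha>))"
  shows "Re B > 0" and "\<bar>Arg B\<bar> < pi / \<alpha>"
proof -
  define w where "w = s powr of_real (2 / \<alpha>)"
  have p: "0 \<le> 2 / \<alpha>" "2 / \<alpha> \<le> 1" using \<alpha> by auto
  have Re_w: "Re w > 0" unfolding w_def by (rule Re_powr_of_real_pos[OF s p])
  have "\<bar>Arg w\<bar> = 2 / \<alpha> * \<bar>Arg s\<bar>"
    unfolding w_def Arg_powr_of_real[OF s p] using p by (simp add: abs_mult)
  also have "\<dots> < 2 / \<alpha> * (pi / 2)"
    using s Arg_Re_pos[of s] \<alpha> by (intro mult_strict_left_mono) auto
  finally have Arg_w: "\<bar>Arg w\<bar> < pi / \<alpha>" by simp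
  have "\<bar>Arg B\<bar> = \<bar>Arg (of_real r + of_real \<rho> * w)\<bar>"
    using t by (simp add: B_def w_def)
  also have "\<dots> \<le> \<bar>Arg (of_real \<rho> * w)\<bar>"
    using Re_w \<rho> r by (intro abs_Arg_add_of_real_le) simp_all
  also have "\<dots> < pi / \<alpha>"
    using \<rho> Arg_w by simp
  finally show "\<bar>Arg B\<bar> < pi / \<alpha>" .
  have "Re B = t * (r + \<rho> * Re w)"
    by (simp add: B_def w_def)
  then show "Re B > 0"
    using t r \<rho> Re_w by (simp add: add_nonneg_pos)
qed

lemma Laplace_transform_square_eq_foxH11:
  fixes \<alpha> :: real and K B :: complex
  assumes \<alpha>: "\<alpha> > 0" and K: "Re K > 0 \<or> K = 0" and B: "Re B > 0" and Arg_B: "\<bar>Arg B\<bar> < pi / \<alpha>"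
  shows "set_integrable lborel {0<..} (\<lambda>x. (2 * x) *\<^sub>R (exp (- B * of_real (x\<^sup>2)) * exp (- K * of_real (x powr \<alpha>))))"
    and "(LINT x:{0<..}|lborel. (2 * x) *\<^sub>R (exp (- B * of_real (x\<^sup>2)) * exp (- K * of_real (x powr \<alpha>))))
         = foxH11 \<alpha> (K * B powr of_real (- \<alpha> / 2)) / B"
proof -
  define h where "h u = exp (- B * of_real u) * exp (- K * of_real (u powr (\<alpha> / 2)))" for u :: real
  have "continuous_on {0<..} h"
    unfolding h_def by (intro continuous_intros) auto
  note square = set_integral_substitution_square[OF Laplace_transform_eq_foxH11(1)[OF \<alpha> K B Arg_B, folded h_def] this]
  have "(x\<^sup>2) powr (\<alpha> / 2) = x powr \<alpha>" if "x > 0" for x :: real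
    using that powr_powr[of x 2 "\<alpha> / 2"] by (simp add: powr_numeral)
  then have "(\<lambda>x. indicator {0<..} x *\<^sub>R ((2 * x) *\<^sub>R h (x\<^sup>2)))
      = (\<lambda>x. indicator {0<..} x *\<^sub>R ((2 * x) *\<^sub>R (exp (- B * of_real (x\<^sup>2)) * exp (- K * of_real (x powr \<alpha>)))))"
    by (auto simp: fun_eq_iff h_def indicator_def)
  then show "set_integrable lborel {0<..} (\<lambda>x. (2 * x) *\<^sub>R (exp (- B * of_real (x\<^sup>2)) * exp (- K * of_real (x powr \<alpha>))))"
    and "(LINT x:{0<..}|lborel. (2 * x) *\<^sub>R (exp (- B * of_real (x\<^sup>2)) * exp (- K * of_real (x powr \<alpha>))))
         = foxH11 \<alpha> (K * B powr of_real (- \<alpha> / 2)) / B"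
    using square Laplace_transform_eq_foxH11(2)[OF \<alpha> K B Arg_B, folded h_def]
    unfolding set_integrable_def set_lebesgue_integral_def by simp_all
qed

lemma expectation_max_closed_form:
  fixes M :: "'a measure" and d1 d2 :: "'a \<Rightarrow> real" and c \<alpha> lb q \<omega> :: real and s :: complex
  assumes c: "c > 0" and \<alpha>: "\<alpha> > 2" and lb: "lb > 0" and q: "q \<ge> 0" and \<omega>: "\<omega> > 0"
    and M: "prob_space M"
    and d1: "distributed M lborel d1 (\<lambda>x. ennreal (dist_density c lb x))"
    and d2: "distributed M lborel d2 (\<lambda>x. ennreal (dist_density c lb x))"
    and indep: "prob_space.indep_var M borel d1 borel d2"
    and s: "Re s > 0"
  shows "(LINT w|M. exp (- of_real (q * (max (d1 w) (d2 w)) powr \<alpha>) * s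
                     - of_real (pi * lb * \<omega> * (max (d1 w) (d2 w))\<^sup>2) * s powr of_real (2 / \<alpha>)))
     = of_real (2 * c) / (of_real c + of_real \<omega> * s powr of_real (2 / \<alpha>))
         * foxH11 \<alpha> (of_real q * s
             * (of_real (pi * lb) * (of_real c + of_real \<omega> * s powr of_real (2 / \<alpha>))) powr of_real (- \<alpha> / 2))
       - of_real (2 * c) / (of_real (2 * c) + of_real \<omega> * s powr of_real (2 / \<alpha>))
         * foxH11 \<alpha> (of_real q * s
             * (of_real (pi * lb) * (of_real (2 * c) + of_real \<omega> * s powr of_real (2 / \<alpha>))) powr of_real (- \<alpha> / 2))"
proof -
  define w where "w = s powr of_real (2 / \<alpha>)"
  define K where "K = of_real q * s"
  define B where "B r = of_real (pi * lb) * (of_real r + of_real \<omega> * w)" for r :: real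
  define T where "T r x = (2 * x) *\<^sub>R (exp (- B r * of_real (x\<^sup>2)) * exp (- K * of_real (x powr \<alpha>)))" for r x :: real
  define \<Phi> where "\<Phi> x = exp (- of_real (q * x powr \<alpha>) * s - of_real (pi * lb * \<omega> * x\<^sup>2) * w)" for x :: real
  have Re_w: "Re w > 0" unfolding w_def using \<alpha> by (intro Re_powr_of_real_pos[OF s]) auto
  have K: "Re K > 0 \<or> K = 0" using q s by (cases "q = 0") (auto simp: K_def)
  have B: "Re (B r) > 0" "\<bar>Arg (B r)\<bar> < pi / \<alpha>" if "r \<ge> 0" for r
    using Arg_scaled_shifted_powr[OF s _ that \<omega>, of \<alpha> "pi * lb"] \<alpha> lb by (auto simp: B_def w_def)
  note T = Laplace_transform_square_eq_foxH11[OF _ K B, folded T_def]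
  have \<Phi>_bounded: "norm (\<Phi> x) \<le> 1" for x
  proof -
    have "0 \<le> q * x powr \<alpha> * Re s" "0 \<le> pi * lb * \<omega> * x\<^sup>2 * Re w"
      using q s lb \<omega> Re_w by simp_all
    then show ?thesis by (simp add: \<Phi>_def)
  qed
  have "exp (- B r * of_real (x\<^sup>2)) * exp (- K * of_real (x powr \<alpha>)) = of_real (exp (- r * lb * pi * x\<^sup>2)) * \<Phi> x"
    for r x
    by (simp add: B_def K_def \<Phi>_def exp_of_real[symmetric] exp_add[symmetric] algebra_simps)
  then have integrand: "(2 * dist_density c lb x * (if 0 \<le> x then 1 - exp (- c * lb * pi * x\<^sup>2) else 0)) *\<^sub>R \<Phi> x
      = of_real (2 * c * lb * pi) * (indicator {0<..} x *\<^sub>R T c x - indicator {0<..} x *\<^sub>R T (2 * c) x)" for x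
    unfolding density_max_dist_density by (simp add: T_def scaleR_conv_of_real algebra_simps)
  have ratio: "of_real (2 * c * lb * pi) / B r = of_real (2 * c) / (of_real r + of_real \<omega> * w)" for r
    using lb mult_divide_mult_cancel_left[of "of_real (pi * lb)" "of_real (2 * c)" "of_real r + of_real \<omega> * w"]
    by (simp add: B_def mult_ac)
  have "(LINT w|M. \<Phi> (max (d1 w) (d2 w)))
      = (\<integral>x. (2 * dist_density c lb x * (if 0 \<le> x then 1 - exp (- c * lb * pi * x\<^sup>2) else 0)) *\<^sub>R \<Phi> x \<partial>lborel)"
    by (rule expectation_max_dist_density[OF c lb M d1 d2 indep _ \<Phi>_bounded]) (simp add: \<Phi>_def)
  also have "\<dots> = of_real (2 * c * lb * pi) * ((LINT x:{0<..}|lborel. T c x) - (LINT x:{0<..}|lborel. T (2 * c) x))"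
    using T(1)[of c] T(1)[of "2 * c"] \<alpha> c unfolding integrand set_lebesgue_integral_def set_integrable_def
    by (simp add: Bochner_Integration.integral_diff)
  also have "\<dots> = of_real (2 * c * lb * pi) * (foxH11 \<alpha> (K * B c powr of_real (- \<alpha> / 2)) / B c
      - foxH11 \<alpha> (K * B (2 * c) powr of_real (- \<alpha> / 2)) / B (2 * c))"
    using T(2)[of c] T(2)[of "2 * c"] \<alpha> c by simp
  also have "\<dots> = of_real (2 * c * lb * pi) / B c * foxH11 \<alpha> (K * B c powr of_real (- \<alpha> / 2))
      - of_real (2 * c * lb * pi) / B (2 * c) * foxH11 \<alpha> (K * B (2 * c) powr of_real (- \<alpha> / 2))"
    by (simp only: right_diff_distrib times_divide_eq_right times_divide_eq_left)
  also have "\<dots> = of_real (2 * c) / (of_real c + of_real \<omega> * w) * foxH11 \<alpha> (K * B c powr of_real (- \<alpha> / 2))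
      - of_real (2 * c) / (of_real (2 * c) + of_real \<omega> * w) * foxH11 \<alpha> (K * B (2 * c) powr of_real (- \<alpha> / 2))"
    unfolding ratio ..
  finally show ?thesis
    by (simp add: \<Phi>_def w_def K_def B_def)
qed

lemma tendsto_expectation_exp_at_right_0:
  fixes M :: "'a measure" and D G :: "'a \<Rightarrow> real" and s z :: complex
  assumes "prob_space M" and [measurable]: "D \<in> borel_measurable M" "G \<in> borel_measurable M"
    and D: "\<And>w. D w \<ge> 0" and G: "\<And>w. G w \<ge> 0" and s: "Re s \<ge> 0" and z: "Re z \<ge> 0"
  shows "((\<lambda>q. LINT w|M. exp (- of_real (q * D w) * s - of_real (G w) * z))
           \<longlongrightarrow> (LINT w|M. exp (- of_real (0 * D w) * s - of_real (G w) * z))) (at_right 0)"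
proof (rule tendsto_at_right_sequentially[of 0 1])
  interpret prob_space M by fact
  fix S :: "nat \<Rightarrow> real"
  assume S: "\<And>n. 0 < S n" "S \<longlonglongrightarrow> 0"
  show "(\<lambda>n. LINT w|M. exp (- of_real (S n * D w) * s - of_real (G w) * z))
      \<longlonglongrightarrow> (LINT w|M. exp (- of_real (0 * D w) * s - of_real (G w) * z))"
  proof (rule integral_dominated_convergence[where w="\<lambda>_. 1"])
    show "AE w in M. (\<lambda>n. exp (- of_real (S n * D w) * s - of_real (G w) * z))
        \<longlonglongrightarrow> exp (- of_real (0 * D w) * s - of_real (G w) * z)"
      using S(2) by (intro AE_I2 tendsto_intros)
    show "AE w in M. norm (exp (- of_real (S n * D w) * s - of_real (G w) * z)) \<le> 1" for n
    proof (intro AE_I2)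
      fix w
      have "0 \<le> S n * D w * Re s" "0 \<le> G w * Re z"
        using S(1)[of n] D[of w] G[of w] s z by (simp_all add: less_imp_le)
      then show "norm (exp (- of_real (S n * D w) * s - of_real (G w) * z)) \<le> 1"
        by simp
    qed
  qed simp_all
qed simp

theorem theorem1:
  fixes M :: "'a measure" and d1 d2 :: "'a \<Rightarrow> real"
    and c \<alpha> lb P \<sigma>2 \<omega> :: real and s :: complex
  assumes "c = 5 / 4"
    and "\<alpha> > 2" and "lb > 0" and "P > 0" and "\<sigma>2 \<ge> 0" and "\<omega> > 0"
    and "prob_space M"
    and "distributed M lborel d1 (\<lambda>x. ennreal (dist_density c lb x))"
    and "distributed M lborel d2 (\<lambda>x. ennreal (dist_density c lb x))"
    and "prob_space.indep_var M borel d1 borel d2"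
    and "Re s > 0"
  shows
    "(LINT w|M. exp (- of_real (\<sigma>2 / P * (max (d1 w) (d2 w)) powr \<alpha>) * s
                     - of_real (pi * lb * \<omega> * (max (d1 w) (d2 w))\<^sup>2) * s powr of_real (2 / \<alpha>)))
     = of_real (2 * c) / (of_real c + of_real \<omega> * s powr of_real (2 / \<alpha>))
         * foxH11 \<alpha> (of_real (\<sigma>2 / P) * s
             * (of_real (pi * lb) * (of_real c + of_real \<omega> * s powr of_real (2 / \<alpha>))) powr of_real (- \<alpha> / 2))
       - of_real (2 * c) / (of_real (2 * c) + of_real \<omega> * s powr of_real (2 / \<alpha>))
         * foxH11 \<alpha> (of_real (\<sigma>2 / P) * s
             * (of_real (pi * lb) * (of_real (2 * c) + of_real \<omega> * s powr of_real (2 / \<alpha>))) powr of_real (- \<alpha> / 2))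
     \<and>
     ((\<lambda>q::real. LINT w|M. exp (- of_real (q * (max (d1 w) (d2 w)) powr \<alpha>) * s
                     - of_real (pi * lb * \<omega> * (max (d1 w) (d2 w))\<^sup>2) * s powr of_real (2 / \<alpha>)))
       \<longlongrightarrow> of_real (2 * c) / (of_real c + of_real \<omega> * s powr of_real (2 / \<alpha>))
           - of_real (2 * c) / (of_real (2 * c) + of_real \<omega> * s powr of_real (2 / \<alpha>)))
       (at_right 0)"
proof -
  have c: "c > 0" using assms(1) by simp
  note closed_form = expectation_max_closed_form[OF c assms(2,3) _ assms(6-11)]
  have at_0: "(LINT w|M. exp (- of_real (0 * (max (d1 w) (d2 w)) powr \<alpha>) * s
                     - of_real (pi * lb * \<omega> * (max (d1 w) (d2 w))\<^sup>2) * s powr of_real (2 / \<alpha>)))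
      = of_real (2 * c) / (of_real c + of_real \<omega> * s powr of_real (2 / \<alpha>))
           - of_real (2 * c) / (of_real (2 * c) + of_real \<omega> * s powr of_real (2 / \<alpha>))"
    using closed_form[OF order_refl] by (simp only: of_real_0 mult_zero_left foxH11_0 mult_1_right)
  have "Re (s powr of_real (2 / \<alpha>)) > 0"
    using Re_powr_of_real_pos[OF assms(11), of "2 / \<alpha>"] assms(2) by simp
  then have "((\<lambda>q::real. LINT w|M. exp (- of_real (q * (max (d1 w) (d2 w)) powr \<alpha>) * s
                     - of_real (pi * lb * \<omega> * (max (d1 w) (d2 w))\<^sup>2) * s powr of_real (2 / \<alpha>)))
       \<longlongrightarrow> of_real (2 * c) / (of_real c + of_real \<omega> * s powr of_real (2 / \<alpha>))
           - of_real (2 * c) / (of_real (2 * c) + of_real \<omega> * s powr of_real (2 / \<alpha>))) (at_right 0)"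
    unfolding at_0[symmetric]
    using assms(3,6,7,11) distributed_measurable[OF assms(8)] distributed_measurable[OF assms(9)]
    by (intro tendsto_expectation_exp_at_right_0) auto
  moreover have "\<sigma>2 / P \<ge> 0" using assms(4,5) by simp
  ultimately show ?thesis
    using closed_form by blast
qed

end
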